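(* Assume the setting and Assumptions A1, A2, A3 of the context. Let $n=\ell k+r$ where $\ell,k>1$ are integers and $r\in\{0,1,\dots,k-1\}$. Then for every $\lambda\ge0$, \[ \mathbb E\Big[\exp\Big(\lambda\Big\|\frac1n\sum_{i=1}^nX_i\Big\|\Big)\Big]\le 2\exp\Big(\frac{B}{c^2}\big((\ell+1)\sigma^2+C_2\ell\,\Phi_{\mathcal C}(k)\big)\,\pi\Big(\frac{\lambda c}{\ell}\Big)+\lambda\tilde A_1\Phi_{\mathcal C}(k)\Big), \] where $\pi(x)=e^x-x-1$, $B=A_1^2+A_2$ and $\tilde A_1=C_1A_1$.
   Context: Let $(\mathcal B,\|\cdot\|)$ be a separable real Banach space with dual $\mathcal B^\star$ (dual norm $\|\cdot\|_\star$, duality pairing $\langle\cdot,\cdot\rangle$). For $r>0$ let $B(r)$ and $B^\star(r)$ denote the closed balls of radius $r$ centered at $0$ in $\mathcal B$ and $\mathcal B^\star$. Fix $c>0$ and put $\mathcal X=B(c)$. Let $(X_i)_{i\ge1}$ be a stochastic process on a probability space $(\Omega,\mathcal F,\mathbb P)$ with values in $\mathcal X$ which is centered ($\mathbb E X_i=0$ for all $i$, Bochner expectation). Let $\mathcal M_i=\sigma(X_1,\dots,X_i)$. $\mathcal C$-mixing: let $\mathcal C$ be a closed subspace of the Banach space of bounded real-valued functions on $\mathcal X$ (with the supremum norm), let $C(\cdot)$ be a seminorm on $\mathcal C$, and $\mathcal C_1=\{f\in\mathcal C: C(f)\le 1\}$. For integers $k\ge1$ the $\mathcal C$-mixing coefficients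 are $\Phi_{\mathcal C}(k)=\sup\{\|\mathbb E[\varphi(X_{i+k})\mid\mathcal M_i]-\mathbb E[\varphi(X_{i+k})]\|_{L_\infty(\mathbb P)}:\ \varphi\in\mathcal C_1,\ i\ge1\}$. Gâteaux derivatives: for $f:\mathcal B\to\mathbb R$, $x\in\mathcal B$, $v\in\mathcal B$, $\delta_v f(x)=\frac{d}{dt}\big|_{t=0}f(x+tv)$ when it exists; $\delta_{v,v}f(x)=\frac{d^2}{dt^2}\big|_{t=0}f(x+tv)$ denotes the second Gâteaux differential in direction $v$. Assumption A1: the norm $x\mapsto\|x\|$ is twice Gâteaux differentiable at every nonzero $x$ in all directions, and there are constants $A_1\ge1$, $A_2>0$ with $|\delta_v(\|x\|)|\le A_1\|v\|$ and $|\delta_{v,v}(\|x\|)|\le A_2\|v\|^2/\|x\|$ for all $x,v\in\mathcal B$, $x\ne0$. Assumption A2: there are constants $c,\sigma^2>0$ with $\|X_i\|\le c$ a.s. and $\mathbb E\|X_i\|^2\le\sigma^2$ for all $i$. Assumption A3: for each $s\in\mathcal B^\star$ the function $h_{1,s}(x)=\langle s,x\rangle$ (restricted to $\mathcal X$) belongs to $\mathcal C$, the function $h_2(x)=\|x\|^2$ belongs to $\mathcal C$, and $\sup_{s\in B^\star(1)}C(h_{1,s})\le C_1$, $C(h_2)\le C_2$ for constants $C_1,C_2\ge0$. *)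

theory Defs
  imports "HOL-Analysis.Analysis" "HOL-Probability.Probability"
begin

text \<open>Restriction of a function on the Banach space to the ball X = B(c);
  functions on X are represented as functions on the whole space vanishing outside X.\<close>
definition restrX :: "real \<Rightarrow> ('b::real_normed_vector \<Rightarrow> real) \<Rightarrow> 'b \<Rightarrow> real" where
  "restrX c f = (\<lambda>x. if norm x \<le> c then f x else 0)"

definition C_class :: "real \<Rightarrow> ('b::real_normed_vector \<Rightarrow> real) set \<Rightarrow> (('b \<Rightarrow> real) \<Rightarrow> real) \<Rightarrow> bool" where
  "C_class c C Cn \<longleftrightarrow>
     (\<forall>f\<in>C. (\<forall>x. c < norm x \<longrightarrow> f x = 0) \<and> bounded (f ` cball 0 c) \<and> f \<in> borel_measurable borel)
   \<and> (\<lambda>x. 0) \<in> C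
   \<and> (\<forall>f\<in>C. \<forall>g\<in>C. (\<lambda>x. f x + g x) \<in> C)
   \<and> (\<forall>f\<in>C. \<forall>a::real. (\<lambda>x. a * f x) \<in> C)
   \<and> (\<forall>F f. (\<forall>n. F n \<in> C) \<and> (\<forall>x. c < norm x \<longrightarrow> f x = 0)
            \<and> uniform_limit (cball 0 c) F f sequentially \<longrightarrow> f \<in> C)
   \<and> (\<forall>f\<in>C. 0 \<le> Cn f)
   \<and> (\<forall>f\<in>C. \<forall>a::real. Cn (\<lambda>x. a * f x) = \<bar>a\<bar> * Cn f)
   \<and> (\<forall>f\<in>C. \<forall>g\<in>C. Cn (\<lambda>x. f x + g x) \<le> Cn f + Cn g)"

definition nat_filt :: "'a measure \<Rightarrow> (nat \<Rightarrow> 'a \<Rightarrow> 'b::topological_space) \<Rightarrow> nat \<Rightarrow> 'a measure" where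
  "nat_filt M X i = sigma (space M) (\<Union>j\<in>{1..i}. {X j -` A \<inter> space M | A. A \<in> sets borel})"

definition C_mixing_coeff :: "'a measure \<Rightarrow> (nat \<Rightarrow> 'a \<Rightarrow> 'b::topological_space) \<Rightarrow> ('b \<Rightarrow> real) set
    \<Rightarrow> (('b \<Rightarrow> real) \<Rightarrow> real) \<Rightarrow> nat \<Rightarrow> ereal" where
  "C_mixing_coeff M X C Cn k =
     (SUP p \<in> {(\<phi>, i). \<phi> \<in> C \<and> Cn \<phi> \<le> 1 \<and> 1 \<le> i}.
        esssup M (\<lambda>\<omega>. ereal \<bar>real_cond_exp M (nat_filt M X (snd p)) (\<lambda>\<omega>. fst p (X (snd p + k) \<omega>)) \<omega>
                          - (\<integral>\<omega>'. fst p (X (snd p + k) \<omega>') \<partial>M)\<bar>))"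

definition gateaux_line :: "('b::real_normed_vector \<Rightarrow> real) \<Rightarrow> 'b \<Rightarrow> 'b \<Rightarrow> real \<Rightarrow> real" where
  "gateaux_line f x v = (\<lambda>t. f (x + t *\<^sub>R v))"

definition pi_fun :: "real \<Rightarrow> real" where
  "pi_fun x = exp x - x - 1"

end

theory Submission
  imports Defs
begin

lemma second_order_comparison:
  fixes g g' g'' h h' h'' :: "real \<Rightarrow> real"
  assumes "\<And>t. 0 \<le> t \<Longrightarrow> t \<le> 1 \<Longrightarrow> (g has_real_derivative g' t) (at t)"
    and "\<And>t. 0 \<le> t \<Longrightarrow> t \<le> 1 \<Longrightarrow> (g' has_real_derivative g'' t) (at t)"
    and "\<And>t. 0 \<le> t \<Longrightarrow> t \<le> 1 \<Longrightarrow> (h has_real_derivative h' t) (at t)"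
    and "\<And>t. 0 \<le> t \<Longrightarrow> t \<le> 1 \<Longrightarrow> (h' has_real_derivative h'' t) (at t)"
    and "\<And>t. 0 \<le> t \<Longrightarrow> t \<le> 1 \<Longrightarrow> g'' t \<le> h'' t"
    and "g 0 = h 0" and "g' 0 = h' 0"
  shows "g 1 \<le> h 1"
proof -
  have slope: "g' t \<le> h' t" if "0 \<le> t" "t \<le> 1" for t
  proof -
    have "(\<lambda>s. h' s - g' s) 0 \<le> (\<lambda>s. h' s - g' s) t"
    proof (rule DERIV_nonneg_imp_nondecreasing[OF that(1)])
      fix x assume "0 \<le> x" "x \<le> t"
      with that assms(2,4,5)[of x]
      show "\<exists>y. ((\<lambda>s. h' s - g' s) has_real_derivative y) (at x) \<and> 0 \<le> y"
        by (intro exI[of _ "h'' x - g'' x"] conjI DERIV_diff) simp_all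
    qed
    with assms(7) show ?thesis by simp
  qed
  have "(\<lambda>s. h s - g s) 0 \<le> (\<lambda>s. h s - g s) 1"
  proof (rule DERIV_nonneg_imp_nondecreasing[of 0 1])
    fix x :: real assume "0 \<le> x" "x \<le> 1"
    with assms(1,3)[of x] slope[of x]
    show "\<exists>y. ((\<lambda>s. h s - g s) has_real_derivative y) (at x) \<and> 0 \<le> y"
      by (intro exI[of _ "h' x - g' x"] conjI DERIV_diff) simp_all
  qed simp
  with assms(6) show ?thesis by simp
qed

lemma sinh_le_mult_cosh:
  assumes "0 \<le> (a::real)"
  shows "sinh a \<le> a * cosh a"
proof -
  have "(\<lambda>s. s * cosh s - sinh s) 0 \<le> (\<lambda>s. s * cosh s - sinh s) a"
  proof (rule DERIV_nonneg_imp_nondecreasing[OF assms])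
    fix x :: real assume "0 \<le> x" "x \<le> a"
    have "((\<lambda>s. s * cosh s - sinh s) has_real_derivative x * sinh x) (at x)"
      by (auto intro!: derivative_eq_intros)
    then show "\<exists>y. ((\<lambda>s. s * cosh s - sinh s) has_real_derivative y) (at x) \<and> 0 \<le> y"
      using \<open>0 \<le> x\<close> by force
  qed
  then show ?thesis by simp
qed

lemma cosh_add_le_mult_exp:
  assumes "0 \<le> (b::real)"
  shows "cosh (a + b) \<le> cosh a * exp b"
proof -
  have "exp (- (a + b)) \<le> exp (- a) * exp b"
    using assms by (simp flip: exp_add)
  then show ?thesis
    by (simp add: cosh_def exp_add field_simps)
qed

lemma cosh_mono_nonneg: "0 \<le> (a::real) \<Longrightarrow> a \<le> b \<Longrightarrow> cosh a \<le> cosh b"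
  using cosh_real_nonneg_le_iff by auto

lemma pi_fun_nonneg: "0 \<le> pi_fun x"
  unfolding pi_fun_def using exp_ge_add_one_self[of x] by linarith

lemma nonneg_by_nonneg_derivative:
  fixes f f' :: "real \<Rightarrow> real"
  assumes "\<And>s. 0 \<le> s \<Longrightarrow> (f has_real_derivative f' s) (at s)"
    and "\<And>s. 0 \<le> s \<Longrightarrow> 0 \<le> f' s" and "f 0 = 0" and "0 \<le> z"
  shows "0 \<le> f z"
  using DERIV_nonneg_imp_nondecreasing[OF assms(4), of f] assms by force

lemma pi_fun_div_square_mono:
  assumes "0 < a" "a \<le> b"
  shows "pi_fun a / a\<^sup>2 \<le> pi_fun b / b\<^sup>2"
proof (rule DERIV_nonneg_imp_nondecreasing[OF assms(2)], intro exI conjI)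
  fix x :: real assume x: "a \<le> x" "x \<le> b"
  then have "0 < x" using assms by simp
  have "0 \<le> (s - 1) * exp s + 1" if "0 \<le> s" for s :: real
    using that
    by (intro nonneg_by_nonneg_derivative[where f = "\<lambda>s. (s - 1) * exp s + 1" and f' = "\<lambda>s. s * exp s"])
      (auto intro!: derivative_eq_intros simp: algebra_simps)
  then have numerator: "0 \<le> (x - 2) * exp x + x + 2"
    using \<open>0 < x\<close>
    by (intro nonneg_by_nonneg_derivative[where f = "\<lambda>s. (s - 2) * exp s + s + 2"
          and f' = "\<lambda>s. (s - 1) * exp s + 1"])
      (auto intro!: derivative_eq_intros simp: algebra_simps)
  show "((\<lambda>s. pi_fun s / s\<^sup>2) has_real_derivative ((x - 2) * exp x + x + 2) / x ^ 3) (at x)"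
    unfolding pi_fun_def using \<open>0 < x\<close>
    by (auto intro!: derivative_eq_intros simp: field_simps power2_eq_square power3_eq_cube)
  show "0 \<le> ((x - 2) * exp x + x + 2) / x ^ 3"
    using numerator \<open>0 < x\<close> by simp
qed

lemma pi_fun_mult_le:
  assumes "0 \<le> \<mu>" "0 < c" "0 \<le> y" "y \<le> c"
  shows "pi_fun (\<mu> * y) \<le> pi_fun (\<mu> * c) * y\<^sup>2 / c\<^sup>2"
proof (cases "\<mu> * y = 0")
  case True
  then have "pi_fun (\<mu> * y) = 0"
    by (auto simp: pi_fun_def)
  then show ?thesis
    using pi_fun_nonneg[of "\<mu> * c"] by simp
next
  case False
  then have "0 < \<mu> * y" "\<mu> * y \<le> \<mu> * c"
    using assms by (auto intro: mult_left_mono)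
  have cross_multiply: "a * Q \<le> b * P" if "0 < P" "0 < Q" "a / P \<le> b / Q" for a b P Q :: real
    using that by (simp add: field_simps)
  have "pi_fun (\<mu> * y) * (\<mu> * c)\<^sup>2 \<le> pi_fun (\<mu> * c) * (\<mu> * y)\<^sup>2"
    using \<open>0 < \<mu> * y\<close> \<open>\<mu> * y \<le> \<mu> * c\<close>
    by (intro cross_multiply[OF _ _ pi_fun_div_square_mono]) auto
  then have "\<mu>\<^sup>2 * (pi_fun (\<mu> * y) * c\<^sup>2) \<le> \<mu>\<^sup>2 * (pi_fun (\<mu> * c) * y\<^sup>2)"
    by (simp add: power_mult_distrib algebra_simps)
  then have "pi_fun (\<mu> * y) * c\<^sup>2 \<le> pi_fun (\<mu> * c) * y\<^sup>2"
    using \<open>0 < \<mu> * y\<close> assms(1) by (simp add: zero_less_mult_iff)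
  then show ?thesis
    using assms(2) by (simp add: field_simps)
qed

lemma one_plus_mult_power_le_exp:
  assumes "0 \<le> a" "0 \<le> b"
  shows "(1 + a) * (1 + b) ^ l \<le> exp (a + real l * b)"
proof -
  have "(1 + a) * (1 + b) ^ l \<le> exp a * exp b ^ l"
    using assms by (intro mult_mono power_mono exp_ge_add_one_self) auto
  then show ?thesis
    by (simp add: exp_add exp_of_nat_mult)
qed

definition gateaux_smooth :: "('b::real_normed_vector \<Rightarrow> real) \<Rightarrow> real \<Rightarrow> real \<Rightarrow> bool" where
  "gateaux_smooth f A\<^sub>1 A\<^sub>2 \<longleftrightarrow> (\<forall>x v. x \<noteq> 0 \<longrightarrow>
        (\<exists>D. (gateaux_line f x v has_real_derivative D) (at 0) \<and> \<bar>D\<bar> \<le> A\<^sub>1 * norm v)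
      \<and> (\<exists>D2. ((\<lambda>t. deriv (gateaux_line f x v) t) has_real_derivative D2) (at 0)
              \<and> \<bar>D2\<bar> \<le> A\<^sub>2 * (norm v)\<^sup>2 / norm x))"

text \<open>Additivity comes from convexity of the norm: the function
  \<open>t \<mapsto> \<parallel>x + 2t u\<parallel>/2 + \<parallel>x + 2t v\<parallel>/2 - \<parallel>x + t (u + v)\<parallel>\<close> has a minimum at \<open>0\<close>.\<close>
lemma linear_gateaux_derivative_norm:
  fixes x :: "'b::real_normed_vector"
  assumes D: "\<And>v. (gateaux_line norm x v has_real_derivative D v) (at 0)"
  shows "linear D"
proof
  have scaled: "((\<lambda>t. gateaux_line norm x v (a * t)) has_real_derivative D v * a) (at 0)" for a :: real and v
    using DERIV_chain2[of "gateaux_line norm x v" "D v" "\<lambda>t. a * t" 0 a] D[of v]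
    by (auto intro!: derivative_eq_intros)
  show "D (a *\<^sub>R v) = a *\<^sub>R D v" for a v
  proof -
    have "gateaux_line norm x (a *\<^sub>R v) = (\<lambda>t. gateaux_line norm x v (a * t))"
      by (simp add: gateaux_line_def fun_eq_iff mult.commute)
    then show ?thesis
      using DERIV_unique[OF D[of "a *\<^sub>R v"]] scaled[where a = a and v = v] by simp
  qed
  show "D (u + v) = D u + D v" for u v
  proof -
    define q where "q t = gateaux_line norm x u (2 * t) / 2 + gateaux_line norm x v (2 * t) / 2
        - gateaux_line norm x (u + v) t" for t
    have "(q has_real_derivative D u + D v - D (u + v)) (at 0)"
      unfolding q_def using scaled[where a = 2 and v = u] scaled[where a = 2 and v = v] D[of "u + v"]
      by (auto intro!: derivative_eq_intros)
    moreover have "q 0 \<le> q t" for t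
    proof -
      have "x + t *\<^sub>R (u + v) = (1/2) *\<^sub>R (x + (2 * t) *\<^sub>R u) + (1/2) *\<^sub>R (x + (2 * t) *\<^sub>R v)"
        by (simp add: algebra_simps flip: scaleR_add_left)
      then have "norm (x + t *\<^sub>R (u + v))
          \<le> norm (x + (2 * t) *\<^sub>R u) / 2 + norm (x + (2 * t) *\<^sub>R v) / 2"
        using norm_triangle_ineq[of "(1/2) *\<^sub>R (x + (2 * t) *\<^sub>R u)" "(1/2) *\<^sub>R (x + (2 * t) *\<^sub>R v)"]
        by simp
      then show ?thesis
        by (simp add: q_def gateaux_line_def)
    qed
    ultimately have "D u + D v - D (u + v) = 0"
      by (metis DERIV_local_min zero_less_one)
    then show ?thesis by simp
  qed
qed

definition norm_derivative :: "'b::real_normed_vector \<Rightarrow> 'b \<Rightarrow>\<^sub>L real" where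
  "norm_derivative x = (if x = 0 then 0
     else Blinfun (\<lambda>v. SOME D. (gateaux_line norm x v has_real_derivative D) (at 0)))"

lemma
  fixes x :: "'b::real_normed_vector"
  assumes smooth: "gateaux_smooth (norm :: 'b \<Rightarrow> real) A\<^sub>1 A\<^sub>2" and "x \<noteq> 0"
  shows has_real_derivative_norm_derivative:
      "(gateaux_line norm x v has_real_derivative norm_derivative x v) (at 0)"
    and abs_norm_derivative_le: "\<bar>norm_derivative x v\<bar> \<le> A\<^sub>1 * norm v"
proof -
  define D where "D v = (SOME D. (gateaux_line norm x v has_real_derivative D) (at 0))" for v
  have bounded: "\<exists>d. (gateaux_line norm x v has_real_derivative d) (at 0) \<and> \<bar>d\<bar> \<le> A\<^sub>1 * norm v" for v
    using smooth \<open>x \<noteq> 0\<close> unfolding gateaux_smooth_def by blast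
  then have D: "(gateaux_line norm x v has_real_derivative D v) (at 0)" for v
    unfolding D_def by (metis someI_ex)
  have "\<bar>D v\<bar> \<le> A\<^sub>1 * norm v" for v
    using bounded[of v] DERIV_unique[OF D[of v]] by auto
  then have "bounded_linear D"
    using linear_gateaux_derivative_norm[OF D]
    by (intro bounded_linear_intro[where K = A\<^sub>1]) (auto simp: linear_add linear_scale mult.commute)
  then have "norm_derivative x v = D v"
    using \<open>x \<noteq> 0\<close> by (simp add: norm_derivative_def D_def[abs_def] bounded_linear_Blinfun_apply)
  then show "(gateaux_line norm x v has_real_derivative norm_derivative x v) (at 0)"
    and "\<bar>norm_derivative x v\<bar> \<le> A\<^sub>1 * norm v"
    using D \<open>\<bar>D v\<bar> \<le> A\<^sub>1 * norm v\<close> by auto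
qed

lemma norm_norm_derivative_le:
  assumes "gateaux_smooth (norm :: 'b::real_normed_vector \<Rightarrow> real) A\<^sub>1 A\<^sub>2" "0 \<le> A\<^sub>1"
  shows "norm (norm_derivative (x::'b)) \<le> A\<^sub>1"
  using assms abs_norm_derivative_le[OF assms(1)]
  by (cases "x = 0") (auto intro!: norm_blinfun_bound simp: norm_derivative_def mult.commute)

lemma has_real_derivative_cosh_norm_line:
  fixes x y :: "'b::real_normed_vector"
  assumes smooth: "gateaux_smooth (norm :: 'b \<Rightarrow> real) A\<^sub>1 A\<^sub>2" and "x \<noteq> 0"
  shows "((\<lambda>t. cosh (\<mu> * norm (x + t *\<^sub>R y))) has_real_derivative
      \<mu> * sinh (\<mu> * norm x) * norm_derivative x y) (at 0)"
  using has_real_derivative_norm_derivative[OF assms, of y]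
  by (auto simp: gateaux_line_def intro!: derivative_eq_intros)

lemma cosh_norm_line_through_zero:
  fixes x y :: "'b::real_normed_vector"
  assumes smooth: "gateaux_smooth (norm :: 'b \<Rightarrow> real) A\<^sub>1 A\<^sub>2"
    and "0 \<le> \<mu>" and t\<^sub>0: "x + t\<^sub>0 *\<^sub>R y = 0"
  obtains g' g'' where
    "\<And>t. ((\<lambda>t. cosh (\<mu> * norm (x + t *\<^sub>R y))) has_real_derivative g' t) (at t)"
    "\<And>t. (g' has_real_derivative g'' t) (at t)"
    "g' 0 = \<mu> * sinh (\<mu> * norm x) * norm_derivative x y"
    "\<And>t. g'' t = (\<mu> * norm y)\<^sup>2 * cosh (\<mu> * norm (x + t *\<^sub>R y))"
proof -
  have line: "cosh (\<mu> * norm (x + t *\<^sub>R y)) = cosh (\<mu> * norm y * (t - t\<^sub>0))" for t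
  proof -
    have "x + t *\<^sub>R y = (t - t\<^sub>0) *\<^sub>R y"
      using t\<^sub>0 by (simp add: algebra_simps eq_neg_iff_add_eq_0 flip: add_eq_0_iff2)
    then have "\<mu> * norm (x + t *\<^sub>R y) = \<bar>\<mu> * norm y * (t - t\<^sub>0)\<bar>"
      using \<open>0 \<le> \<mu>\<close> by (simp add: abs_mult)
    then show ?thesis by simp
  qed
  define g' where "g' t = sinh (\<mu> * norm y * (t - t\<^sub>0)) * (\<mu> * norm y)" for t
  define g'' where "g'' t = (\<mu> * norm y)\<^sup>2 * cosh (\<mu> * norm y * (t - t\<^sub>0))" for t
  have g: "((\<lambda>t. cosh (\<mu> * norm (x + t *\<^sub>R y))) has_real_derivative g' t) (at t)" for t
    unfolding line g'_def by (auto intro!: derivative_eq_intros)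
  moreover have "(g' has_real_derivative g'' t) (at t)" for t
    unfolding g'_def g''_def by (auto intro!: derivative_eq_intros simp: power2_eq_square)
  moreover have "g' 0 = \<mu> * sinh (\<mu> * norm x) * norm_derivative x y"
  proof (cases "x = 0")
    case True
    then have "t\<^sub>0 = 0 \<or> y = 0"
      using t\<^sub>0 by simp
    then show ?thesis
      using True by (auto simp: g'_def)
  next
    case False
    then show ?thesis
      using DERIV_unique[OF g has_real_derivative_cosh_norm_line[OF smooth False]] by simp
  qed
  moreover have "g'' t = (\<mu> * norm y)\<^sup>2 * cosh (\<mu> * norm (x + t *\<^sub>R y))" for t
    by (simp add: g''_def line)
  ultimately show ?thesis
    using that by blast
qed

lemma norm_line_derivatives:
  fixes x y :: "'b::real_normed_vector"
  defines "N \<equiv> \<lambda>t. norm (x + t *\<^sub>R y)"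
  assumes smooth: "gateaux_smooth (norm :: 'b \<Rightarrow> real) A\<^sub>1 A\<^sub>2" and "x + t *\<^sub>R y \<noteq> 0"
  shows "(N has_real_derivative deriv N t) (at t)" "\<bar>deriv N t\<bar> \<le> A\<^sub>1 * norm y"
    and "(deriv N has_real_derivative deriv (deriv N) t) (at t)"
    "\<bar>deriv (deriv N) t\<bar> \<le> A\<^sub>2 * (norm y)\<^sup>2 / N t"
proof -
  have shift: "gateaux_line norm (x + t *\<^sub>R y) y = (\<lambda>s. N (s + t))"
    by (simp add: fun_eq_iff gateaux_line_def N_def algebra_simps)
  have deriv_shift: "deriv (\<lambda>s. N (s + t)) s = deriv N (s + t)" for s
    unfolding deriv_def using DERIV_shift[of N _ s t] by simp
  have "(\<exists>D. (gateaux_line norm (x + t *\<^sub>R y) y has_real_derivative D) (at 0) \<and> \<bar>D\<bar> \<le> A\<^sub>1 * norm y)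
    \<and> (\<exists>D2. ((\<lambda>s. deriv (gateaux_line norm (x + t *\<^sub>R y) y) s) has_real_derivative D2) (at 0)
        \<and> \<bar>D2\<bar> \<le> A\<^sub>2 * (norm y)\<^sup>2 / norm (x + t *\<^sub>R y))"
    using smooth \<open>x + t *\<^sub>R y \<noteq> 0\<close> unfolding gateaux_smooth_def by blast
  then obtain D1 D2 where
      D1: "((\<lambda>s. N (s + t)) has_real_derivative D1) (at 0)" "\<bar>D1\<bar> \<le> A\<^sub>1 * norm y"
    and D2: "((\<lambda>s. deriv N (s + t)) has_real_derivative D2) (at 0)" "\<bar>D2\<bar> \<le> A\<^sub>2 * (norm y)\<^sup>2 / N t"
    unfolding shift deriv_shift by (auto simp: N_def)
  have "(N has_real_derivative D1) (at t)" "(deriv N has_real_derivative D2) (at t)"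
    using DERIV_shift[of N D1 0 t] DERIV_shift[of "deriv N" D2 0 t] D1(1) D2(1) by simp_all
  with D1(2) D2(2) show "(N has_real_derivative deriv N t) (at t)" "\<bar>deriv N t\<bar> \<le> A\<^sub>1 * norm y"
    and "(deriv N has_real_derivative deriv (deriv N) t) (at t)"
    "\<bar>deriv (deriv N) t\<bar> \<le> A\<^sub>2 * (norm y)\<^sup>2 / N t"
    by (simp_all add: DERIV_imp_deriv)
qed

text \<open>The second derivative of \<open>cosh (\<mu> N)\<close> is \<open>\<mu>\<^sup>2 N'\<^sup>2 cosh (\<mu> N) + \<mu> N'' sinh (\<mu> N)\<close>;
  the second term is controlled by \<open>sinh a \<le> a cosh a\<close>, which cancels the \<open>1 / N\<close> in the
  bound on \<open>N''\<close>.\<close>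
lemma cosh_norm_line_avoiding_zero:
  fixes x y :: "'b::real_normed_vector"
  assumes smooth: "gateaux_smooth (norm :: 'b \<Rightarrow> real) A\<^sub>1 A\<^sub>2"
    and "0 \<le> A\<^sub>2" "0 \<le> \<mu>" and nonzero: "\<And>t. x + t *\<^sub>R y \<noteq> 0"
  obtains g' g'' where
    "\<And>t. ((\<lambda>t. cosh (\<mu> * norm (x + t *\<^sub>R y))) has_real_derivative g' t) (at t)"
    "\<And>t. (g' has_real_derivative g'' t) (at t)"
    "g' 0 = \<mu> * sinh (\<mu> * norm x) * norm_derivative x y"
    "\<And>t. g'' t \<le> (A\<^sub>1\<^sup>2 + A\<^sub>2) * (\<mu> * norm y)\<^sup>2 * cosh (\<mu> * norm (x + t *\<^sub>R y))"
proof
  define N where "N t = norm (x + t *\<^sub>R y)" for t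
  note N = norm_line_derivatives[OF smooth nonzero, folded N_def]
  have "0 < N t" for t
    using nonzero by (simp add: N_def)
  show "((\<lambda>t. cosh (\<mu> * norm (x + t *\<^sub>R y))) has_real_derivative
      sinh (\<mu> * N t) * (\<mu> * deriv N t)) (at t)" for t
    using N(1) by (auto simp: N_def[abs_def] intro!: derivative_eq_intros)
  show "((\<lambda>t. sinh (\<mu> * N t) * (\<mu> * deriv N t)) has_real_derivative
      cosh (\<mu> * N t) * (\<mu> * deriv N t)\<^sup>2 + sinh (\<mu> * N t) * (\<mu> * deriv (deriv N) t)) (at t)" for t
    using N(1,3) by (auto intro!: derivative_eq_intros simp: algebra_simps power2_eq_square)
  have "N = gateaux_line norm x y"
    by (simp add: fun_eq_iff N_def gateaux_line_def)
  then have "deriv N 0 = norm_derivative x y"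
    using has_real_derivative_norm_derivative[OF smooth, of x y] nonzero[of 0]
    by (simp add: DERIV_imp_deriv)
  then show "sinh (\<mu> * N 0) * (\<mu> * deriv N 0) = \<mu> * sinh (\<mu> * norm x) * norm_derivative x y"
    by (simp add: N_def)
  fix t
  have "\<bar>deriv N t\<bar> \<le> \<bar>A\<^sub>1\<bar> * norm y"
    using N(2)[of t] by (metis abs_ge_self mult_right_mono norm_ge_zero order_trans)
  then have "(\<mu> * deriv N t)\<^sup>2 \<le> (\<mu> * (A\<^sub>1 * norm y))\<^sup>2"
    using \<open>0 \<le> \<mu>\<close> unfolding abs_le_square_iff[symmetric]
    by (auto simp: abs_mult intro: mult_left_mono)
  then have "cosh (\<mu> * N t) * (\<mu> * deriv N t)\<^sup>2 \<le> cosh (\<mu> * N t) * (\<mu> * (A\<^sub>1 * norm y))\<^sup>2"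
    by (simp add: mult_left_mono)
  then have first: "cosh (\<mu> * N t) * (\<mu> * deriv N t)\<^sup>2 \<le> A\<^sub>1\<^sup>2 * (\<mu> * norm y)\<^sup>2 * cosh (\<mu> * N t)"
    by (simp add: algebra_simps power_mult_distrib)
  have "sinh (\<mu> * N t) * (\<mu> * deriv (deriv N) t) \<le> sinh (\<mu> * N t) * (\<mu> * (A\<^sub>2 * (norm y)\<^sup>2 / N t))"
    using N(4)[of t] \<open>0 < N t\<close> \<open>0 \<le> \<mu>\<close> by (intro mult_left_mono) auto
  also have "\<dots> \<le> (\<mu> * N t * cosh (\<mu> * N t)) * (\<mu> * (A\<^sub>2 * (norm y)\<^sup>2 / N t))"
    using sinh_le_mult_cosh[of "\<mu> * N t"] \<open>0 < N t\<close> \<open>0 \<le> \<mu>\<close> \<open>0 \<le> A\<^sub>2\<close>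
    by (intro mult_right_mono) auto
  also have "\<dots> = A\<^sub>2 * (\<mu> * norm y)\<^sup>2 * cosh (\<mu> * N t)"
    using \<open>0 < N t\<close> by (simp add: field_simps power2_eq_square)
  finally show "cosh (\<mu> * N t) * (\<mu> * deriv N t)\<^sup>2 + sinh (\<mu> * N t) * (\<mu> * deriv (deriv N) t)
      \<le> (A\<^sub>1\<^sup>2 + A\<^sub>2) * (\<mu> * norm y)\<^sup>2 * cosh (\<mu> * norm (x + t *\<^sub>R y))"
    using first by (simp add: N_def algebra_simps)
qed

text \<open>Along the segment \<open>t \<mapsto> x + t y\<close>, the function \<open>cosh (\<mu> \<parallel>x + t y\<parallel>)\<close> has the same value
  and slope at \<open>0\<close> as the comparison function \<open>h\<close> below, and a smaller second derivative on
  \<open>[0, 1]\<close>, since \<open>cosh (\<mu> \<parallel>x + t y\<parallel>) \<le> cosh (\<mu> \<parallel>x\<parallel>) e\<^sup>t\<^sup>\<mu>\<^sup>\<parallel>\<^sup>y\<^sup>\<parallel>\<close>.\<close>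
lemma cosh_norm_add_le:
  fixes x y :: "'b::real_normed_vector"
  assumes smooth: "gateaux_smooth (norm :: 'b \<Rightarrow> real) A\<^sub>1 A\<^sub>2"
    and "1 \<le> A\<^sub>1" "0 \<le> A\<^sub>2" "0 \<le> \<mu>"
  shows "cosh (\<mu> * norm (x + y)) \<le> cosh (\<mu> * norm x) + \<mu> * sinh (\<mu> * norm x) * norm_derivative x y
      + (A\<^sub>1\<^sup>2 + A\<^sub>2) * cosh (\<mu> * norm x) * pi_fun (\<mu> * norm y)"
proof -
  define B where "B = A\<^sub>1\<^sup>2 + A\<^sub>2"
  have "1 \<le> B"
    using assms(2,3) mult_mono[OF assms(2) assms(2)] by (simp add: B_def power2_eq_square)
  obtain g' g'' where g: "\<And>t. ((\<lambda>t. cosh (\<mu> * norm (x + t *\<^sub>R y))) has_real_derivative g' t) (at t)"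
      and g': "\<And>t. (g' has_real_derivative g'' t) (at t)"
      and g'0: "g' 0 = \<mu> * sinh (\<mu> * norm x) * norm_derivative x y"
      and g'': "\<And>t. g'' t \<le> B * (\<mu> * norm y)\<^sup>2 * cosh (\<mu> * norm (x + t *\<^sub>R y))"
  proof (cases "\<exists>t\<^sub>0. x + t\<^sub>0 *\<^sub>R y = 0")
    case True
    then obtain t\<^sub>0 where "x + t\<^sub>0 *\<^sub>R y = 0" by blast
    then obtain g' g'' where line: "\<And>t. ((\<lambda>t. cosh (\<mu> * norm (x + t *\<^sub>R y))) has_real_derivative g' t) (at t)"
        "\<And>t. (g' has_real_derivative g'' t) (at t)"
        "g' 0 = \<mu> * sinh (\<mu> * norm x) * norm_derivative x y"
        and g'': "\<And>t. g'' t = (\<mu> * norm y)\<^sup>2 * cosh (\<mu> * norm (x + t *\<^sub>R y))"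
      using cosh_norm_line_through_zero[OF smooth \<open>0 \<le> \<mu>\<close>] by blast
    have "g'' t \<le> B * (\<mu> * norm y)\<^sup>2 * cosh (\<mu> * norm (x + t *\<^sub>R y))" for t
      unfolding g'' using mult_right_mono[OF \<open>1 \<le> B\<close>, of "(\<mu> * norm y)\<^sup>2"]
      by (intro mult_right_mono) auto
    with line show ?thesis
      by (rule that)
  next
    case False
    from cosh_norm_line_avoiding_zero[OF smooth \<open>0 \<le> A\<^sub>2\<close> \<open>0 \<le> \<mu>\<close>] False that show ?thesis
      unfolding B_def by blast
  qed
  define a where "a = \<mu> * norm y"
  define h where "h t = cosh (\<mu> * norm x) + g' 0 * t + B * cosh (\<mu> * norm x) * pi_fun (t * a)" for t
  define h' where "h' t = g' 0 + B * cosh (\<mu> * norm x) * (exp (t * a) * a - a)" for t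
  define h'' where "h'' t = B * cosh (\<mu> * norm x) * (exp (t * a) * a * a)" for t
  have "cosh (\<mu> * norm (x + 1 *\<^sub>R y)) \<le> h 1"
  proof (rule second_order_comparison[OF g g'])
    show "(h has_real_derivative h' t) (at t)" "(h' has_real_derivative h'' t) (at t)" for t
      unfolding h_def h'_def h''_def pi_fun_def by (auto intro!: derivative_eq_intros)
    show "cosh (\<mu> * norm (x + 0 *\<^sub>R y)) = h 0" "g' 0 = h' 0"
      by (simp_all add: h_def h'_def pi_fun_def)
    fix t :: real assume "0 \<le> t" "t \<le> 1"
    have "norm (x + t *\<^sub>R y) \<le> norm x + t * norm y"
      using norm_triangle_ineq[of x "t *\<^sub>R y"] \<open>0 \<le> t\<close> by simp
    from mult_left_mono[OF this \<open>0 \<le> \<mu>\<close>]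
    have "\<mu> * norm (x + t *\<^sub>R y) \<le> \<mu> * norm x + t * a"
      by (simp add: a_def algebra_simps)
    then have "cosh (\<mu> * norm (x + t *\<^sub>R y)) \<le> cosh (\<mu> * norm x + t * a)"
      using \<open>0 \<le> \<mu>\<close> by (intro cosh_mono_nonneg) auto
    also have "\<dots> \<le> cosh (\<mu> * norm x) * exp (t * a)"
      using \<open>0 \<le> t\<close> \<open>0 \<le> \<mu>\<close> by (intro cosh_add_le_mult_exp) (simp add: a_def)
    finally have "cosh (\<mu> * norm (x + t *\<^sub>R y)) \<le> cosh (\<mu> * norm x) * exp (t * a)" .
    then have "B * a\<^sup>2 * cosh (\<mu> * norm (x + t *\<^sub>R y)) \<le> B * a\<^sup>2 * (cosh (\<mu> * norm x) * exp (t * a))"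
      using \<open>1 \<le> B\<close> by (intro mult_left_mono) auto
    with g''[of t] show "g'' t \<le> h'' t"
      by (simp add: h''_def a_def power2_eq_square mult_ac)
  qed
  then show ?thesis
    using g'0 by (simp add: h_def B_def a_def mult.commute)
qed

lemma cosh_norm_add_le_quadratic:
  fixes x y :: "'b::real_normed_vector"
  assumes smooth: "gateaux_smooth (norm :: 'b \<Rightarrow> real) A\<^sub>1 A\<^sub>2"
    and "1 \<le> A\<^sub>1" "0 \<le> A\<^sub>2" "0 \<le> \<mu>" "0 < c" "norm y \<le> c"
  shows "cosh (\<mu> * norm (x + y)) \<le> cosh (\<mu> * norm x) + \<mu> * sinh (\<mu> * norm x) * norm_derivative x y
      + (A\<^sub>1\<^sup>2 + A\<^sub>2) / c\<^sup>2 * pi_fun (\<mu> * c) * cosh (\<mu> * norm x) * (norm y)\<^sup>2"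
proof -
  have "(A\<^sub>1\<^sup>2 + A\<^sub>2) * cosh (\<mu> * norm x) * pi_fun (\<mu> * norm y)
      \<le> (A\<^sub>1\<^sup>2 + A\<^sub>2) * cosh (\<mu> * norm x) * (pi_fun (\<mu> * c) * (norm y)\<^sup>2 / c\<^sup>2)"
    using pi_fun_mult_le[of \<mu> c "norm y"] assms(3-) by (intro mult_left_mono) auto
  then show ?thesis
    using cosh_norm_add_le[OF assms(1-4), of x y] by (simp add: field_simps)
qed

lemma (in finite_measure) integrable_abs_bounded:
  fixes f :: "'a \<Rightarrow> real"
  assumes "f \<in> borel_measurable M" "\<And>\<omega>. \<omega> \<in> space M \<Longrightarrow> \<bar>f \<omega>\<bar> \<le> b"
  shows "integrable M f"
  using assms by (intro integrable_const_bound[where B = b]) auto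

text \<open>A weak form of \<open>E[f | F] \<le> b\<close> a.e., tested against bounded nonnegative \<open>F\<close>-measurable
  weights; it avoids measurability questions about the integrands used below.\<close>
definition cond_exp_le :: "'a measure \<Rightarrow> 'a measure \<Rightarrow> ('a \<Rightarrow> real) \<Rightarrow> real \<Rightarrow> bool" where
  "cond_exp_le M F f b \<longleftrightarrow> (\<forall>G B. G \<in> borel_measurable F \<longrightarrow> (\<forall>\<omega>\<in>space M. 0 \<le> G \<omega> \<and> G \<omega> \<le> B)
     \<longrightarrow> (\<integral>\<omega>. G \<omega> * f \<omega> \<partial>M) \<le> b * (\<integral>\<omega>. G \<omega> \<partial>M))"

lemma cond_exp_leI:
  assumes "\<And>G B. G \<in> borel_measurable F \<Longrightarrow> (\<And>\<omega>. \<omega> \<in> space M \<Longrightarrow> 0 \<le> G \<omega>)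
      \<Longrightarrow> (\<And>\<omega>. \<omega> \<in> space M \<Longrightarrow> G \<omega> \<le> B) \<Longrightarrow> (\<integral>\<omega>. G \<omega> * f \<omega> \<partial>M) \<le> b * (\<integral>\<omega>. G \<omega> \<partial>M)"
  shows "cond_exp_le M F f b"
  using assms unfolding cond_exp_le_def by blast

lemma cond_exp_leD:
  assumes "cond_exp_le M F f b" "G \<in> borel_measurable F"
    "\<And>\<omega>. \<omega> \<in> space M \<Longrightarrow> 0 \<le> G \<omega>" "\<And>\<omega>. \<omega> \<in> space M \<Longrightarrow> G \<omega> \<le> B"
  shows "(\<integral>\<omega>. G \<omega> * f \<omega> \<partial>M) \<le> b * (\<integral>\<omega>. G \<omega> \<partial>M)"
  using assms unfolding cond_exp_le_def by blast

lemma countable_approximation: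
  fixes T :: "'a \<Rightarrow> 'b::{metric_space, second_countable_topology}"
  assumes [measurable]: "T \<in> borel_measurable F" and "0 < e"
  obtains d :: "nat \<Rightarrow> 'b" and j where "j \<in> measurable F (count_space UNIV)"
    "\<And>\<omega>. dist (T \<omega>) (d (j \<omega>)) < e"
proof -
  obtain D :: "'b set" where "countable D" and dense: "\<And>U. open U \<Longrightarrow> U \<noteq> {} \<Longrightarrow> \<exists>d\<in>D. d \<in> U"
    using countable_dense_exists by blast
  have "D \<noteq> {}"
    using dense[of UNIV] by auto
  have close: "\<exists>i. dist x (from_nat_into D i) < e" for x
  proof -
    obtain d where "d \<in> D" "dist x d < e"
      using dense[of "ball x e"] \<open>0 < e\<close> by auto
    then show ?thesis
      using range_from_nat_into[OF \<open>D \<noteq> {}\<close> \<open>countable D\<close>] by (metis imageE)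
  qed
  define j where "j \<omega> = (LEAST i. dist (T \<omega>) (from_nat_into D i) < e)" for \<omega>
  have "j \<in> measurable F (count_space UNIV)"
    unfolding j_def by measurable
  moreover have "dist (T \<omega>) (from_nat_into D (j \<omega>)) < e" for \<omega>
    unfolding j_def by (rule LeastI_ex[OF close])
  ultimately show ?thesis
    using that by blast
qed

text \<open>Splitting the integrand according to the value of the index \<open>j\<close> reduces to finitely many
  fixed functionals, for which the hypothesis applies; dominated convergence removes the truncation.\<close>
lemma integral_mult_blinfun_index_le:
  fixes Y :: "'a \<Rightarrow> 'b::{banach, second_countable_topology}" and s :: "nat \<Rightarrow> 'b \<Rightarrow>\<^sub>L real"
  assumes "prob_space M" and sub: "subalgebra M F"
    and [measurable]: "j \<in> measurable F (count_space UNIV)" "G \<in> borel_measurable F"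
    and G: "\<And>\<omega>. \<omega> \<in> space M \<Longrightarrow> 0 \<le> G \<omega> \<and> G \<omega> \<le> B"
    and [measurable]: "Y \<in> borel_measurable M" and Y: "\<And>\<omega>. \<omega> \<in> space M \<Longrightarrow> norm (Y \<omega>) \<le> c"
    and s: "\<And>i. norm (s i) \<le> A" and "0 \<le> D"
    and lin: "\<And>\<phi> :: 'b \<Rightarrow>\<^sub>L real. cond_exp_le M F (\<lambda>\<omega>. blinfun_apply \<phi> (Y \<omega>)) (D * norm \<phi>)"
  shows "(\<integral>\<omega>. G \<omega> * s (j \<omega>) (Y \<omega>) \<partial>M) \<le> D * A * (\<integral>\<omega>. G \<omega> \<partial>M)"
proof -
  interpret prob_space M by fact
  have [measurable]: "j \<in> measurable M (count_space UNIV)" "G \<in> borel_measurable M"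
    by (rule measurable_from_subalg[OF sub], measurable)+
  have [measurable]: "(\<lambda>\<omega>. s i (Y \<omega>)) \<in> borel_measurable M" for i
    by (intro borel_measurable_continuous_on[of "s i", OF _ \<open>Y \<in> borel_measurable M\<close>]
        continuous_intros)
  have "0 \<le> A"
    using s[of 0] norm_ge_zero order.trans by blast
  obtain \<omega>\<^sub>0 where "\<omega>\<^sub>0 \<in> space M"
    using not_empty by blast
  then have "0 \<le> B" "0 \<le> c"
    using G Y norm_ge_zero order.trans by (force, blast)
  have s_Y: "\<bar>s i (Y \<omega>)\<bar> \<le> A * c" if "\<omega> \<in> space M" for i \<omega>
    using norm_blinfun[of "s i" "Y \<omega>"] mult_mono[OF s[of i] Y[OF that] \<open>0 \<le> A\<close>] by simp
  define f where "f \<omega> = G \<omega> * s (j \<omega>) (Y \<omega>)" for \<omega>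
  define G' where "G' i \<omega> = (if j \<omega> = i then G \<omega> else 0)" for i \<omega>
  have [measurable]: "G' i \<in> borel_measurable F" "G' i \<in> borel_measurable M" for i
    unfolding G'_def by measurable
  have f: "f \<in> borel_measurable M"
    unfolding f_def by (rule measurable_compose_countable[where f = "\<lambda>i \<omega>. G \<omega> * s i (Y \<omega>)"]) auto
  have G': "0 \<le> G' i \<omega> \<and> G' i \<omega> \<le> B" if "\<omega> \<in> space M" for i \<omega>
    using G[OF that] \<open>0 \<le> B\<close> by (simp add: G'_def)
  have int_G: "integrable M G" "integrable M (G' i)" for i
    using G G' by (auto intro!: integrable_abs_bounded[where b = B])
  have truncated: "(\<Sum>i<N. G' i \<omega> * s i (Y \<omega>)) = (if j \<omega> < N then f \<omega> else 0)" for N \<omega>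
  proof -
    have "(\<Sum>i<N. G' i \<omega> * s i (Y \<omega>)) = (\<Sum>i<N. if j \<omega> = i then G \<omega> * s i (Y \<omega>) else 0)"
      by (intro sum.cong) (auto simp: G'_def)
    then show ?thesis
      by (simp add: sum.delta' f_def)
  qed
  have int_term: "integrable M (\<lambda>\<omega>. G' i \<omega> * s i (Y \<omega>))" for i
    using G s_Y \<open>0 \<le> B\<close> \<open>0 \<le> A\<close> \<open>0 \<le> c\<close>
    by (intro integrable_abs_bounded[where b = "B * (A * c)"])
      (auto simp: G'_def abs_mult intro!: mult_mono)
  have term_le: "(\<integral>\<omega>. G' i \<omega> * s i (Y \<omega>) \<partial>M) \<le> D * A * (\<integral>\<omega>. G' i \<omega> \<partial>M)" for i
  proof -
    have "(\<integral>\<omega>. G' i \<omega> * s i (Y \<omega>) \<partial>M) \<le> D * norm (s i) * (\<integral>\<omega>. G' i \<omega> \<partial>M)"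
      using G' by (intro cond_exp_leD[OF lin, where B = B]) auto
    also have "\<dots> \<le> D * A * (\<integral>\<omega>. G' i \<omega> \<partial>M)"
      using G' s[of i] \<open>0 \<le> D\<close> by (intro mult_right_mono mult_left_mono integral_nonneg_AE) auto
    finally show ?thesis .
  qed
  have "(\<integral>\<omega>. (\<Sum>i<N. G' i \<omega> * s i (Y \<omega>)) \<partial>M) \<le> D * A * (\<integral>\<omega>. G \<omega> \<partial>M)" for N
  proof -
    have "(\<integral>\<omega>. (\<Sum>i<N. G' i \<omega> * s i (Y \<omega>)) \<partial>M) = (\<Sum>i<N. \<integral>\<omega>. G' i \<omega> * s i (Y \<omega>) \<partial>M)"
      using int_term by (simp add: integral_sum)
    also have "\<dots> \<le> D * A * (\<integral>\<omega>. (\<Sum>i<N. G' i \<omega>) \<partial>M)"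
      using term_le int_G by (simp add: sum_mono integral_sum sum_distrib_left)
    also have "\<dots> \<le> D * A * (\<integral>\<omega>. G \<omega> \<partial>M)"
    proof (intro mult_left_mono integral_mono)
      fix \<omega> assume "\<omega> \<in> space M"
      have "(\<Sum>i<N. G' i \<omega>) = (if j \<omega> \<in> {..<N} then G \<omega> else 0)"
        unfolding G'_def by (simp add: sum.delta')
      then show "(\<Sum>i<N. G' i \<omega>) \<le> G \<omega>"
        using G[OF \<open>\<omega> \<in> space M\<close>] by simp
    qed (use int_G \<open>0 \<le> D\<close> \<open>0 \<le> A\<close> in auto)
    finally show ?thesis .
  qed
  moreover have "(\<lambda>N. \<integral>\<omega>. (\<Sum>i<N. G' i \<omega> * s i (Y \<omega>)) \<partial>M) \<longlonglongrightarrow> integral\<^sup>L M f"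
  proof (rule integral_dominated_convergence[where w = "\<lambda>\<omega>. \<bar>f \<omega>\<bar>"])
    show "integrable M (\<lambda>\<omega>. \<bar>f \<omega>\<bar>)"
      using G s_Y f \<open>0 \<le> B\<close> \<open>0 \<le> A\<close> \<open>0 \<le> c\<close>
      by (auto intro!: integrable_abs_bounded[where b = "B * (A * c)"] mult_mono simp: f_def abs_mult)
    show "AE \<omega> in M. (\<lambda>N. \<Sum>i<N. G' i \<omega> * s i (Y \<omega>)) \<longlonglongrightarrow> f \<omega>"
    proof (intro AE_I2 tendsto_eventually)
      fix \<omega>
      show "\<forall>\<^sub>F N in sequentially. (\<Sum>i<N. G' i \<omega> * s i (Y \<omega>)) = f \<omega>"
        unfolding truncated using eventually_gt_at_top[of "j \<omega>"] by eventually_elim simp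
    qed
  qed (use f in \<open>auto simp: truncated\<close>)
  ultimately show ?thesis
    unfolding f_def by (meson LIMSEQ_le_const2)
qed

lemma borel_measurable_cosh_real [measurable]: "(cosh :: real \<Rightarrow> real) \<in> borel_measurable borel"
  by (intro borel_measurable_continuous_onI continuous_intros)

lemma borel_measurable_sinh_real [measurable]: "(sinh :: real \<Rightarrow> real) \<in> borel_measurable borel"
  by (intro borel_measurable_continuous_onI continuous_intros)

lemma (in finite_measure) integrable_cosh_norm:
  fixes Z :: "'a \<Rightarrow> 'b::{banach, second_countable_topology}"
  assumes [measurable]: "Z \<in> borel_measurable M" and "\<And>\<omega>. \<omega> \<in> space M \<Longrightarrow> norm (Z \<omega>) \<le> b"
    and "0 \<le> \<mu>"
  shows "integrable M (\<lambda>\<omega>. cosh (\<mu> * norm (Z \<omega>)))"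
  using assms by (intro integrable_abs_bounded[where b = "cosh (\<mu> * b)"])
    (auto intro!: cosh_mono_nonneg mult_left_mono)

lemma cosh_norm_le_mult_exp:
  assumes "norm (u - v) \<le> e" "0 \<le> \<mu>"
  shows "cosh (\<mu> * norm u) \<le> cosh (\<mu> * norm v) * exp (\<mu> * e)"
proof -
  have "\<mu> * norm u \<le> \<mu> * norm v + \<mu> * e"
    using norm_triangle_ineq2[of u v] assms by (simp add: mult_left_mono flip: distrib_left)
  then have "cosh (\<mu> * norm u) \<le> cosh (\<mu> * norm v + \<mu> * e)"
    using assms by (intro cosh_mono_nonneg) auto
  also have "\<dots> \<le> cosh (\<mu> * norm v) * exp (\<mu> * e)"
    using assms order.trans[OF norm_ge_zero assms(1)] by (intro cosh_add_le_mult_exp) simp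
  finally show ?thesis .
qed

text \<open>For a countably-valued \<open>F\<close>-measurable first summand, the derivative of the norm at it is an
  \<open>F\<close>-measurable random functional, so the linear term of \<open>cosh_norm_add_le_quadratic\<close> can be
  integrated against the hypothesis on \<open>Y\<close>.\<close>
lemma integral_cosh_norm_add_countable_le:
  fixes d :: "nat \<Rightarrow> 'b::{banach, second_countable_topology}" and Y :: "'a \<Rightarrow> 'b"
  assumes "prob_space M" and sub: "subalgebra M F"
    and [measurable]: "j \<in> measurable F (count_space UNIV)"
    and K: "\<And>\<omega>. \<omega> \<in> space M \<Longrightarrow> norm (d (j \<omega>)) \<le> K"
    and [measurable]: "Y \<in> borel_measurable M" and Y: "\<And>\<omega>. \<omega> \<in> space M \<Longrightarrow> norm (Y \<omega>) \<le> c"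
    and "0 < c" and smooth: "gateaux_smooth (norm :: 'b \<Rightarrow> real) A\<^sub>1 A\<^sub>2"
    and "1 \<le> A\<^sub>1" "0 \<le> A\<^sub>2" "0 \<le> \<mu>" "0 \<le> V" "0 \<le> D"
    and quad: "cond_exp_le M F (\<lambda>\<omega>. (norm (Y \<omega>))\<^sup>2) V"
    and lin: "\<And>\<phi> :: 'b \<Rightarrow>\<^sub>L real. cond_exp_le M F (\<lambda>\<omega>. blinfun_apply \<phi> (Y \<omega>)) (D * norm \<phi>)"
  shows "(\<integral>\<omega>. cosh (\<mu> * norm (d (j \<omega>) + Y \<omega>)) \<partial>M)
    \<le> (1 + (A\<^sub>1\<^sup>2 + A\<^sub>2) / c\<^sup>2 * V * pi_fun (\<mu> * c) + \<mu> * A\<^sub>1 * D) * (\<integral>\<omega>. cosh (\<mu> * norm (d (j \<omega>))) \<partial>M)"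
proof -
  interpret prob_space M by fact
  define \<kappa> where "\<kappa> = (A\<^sub>1\<^sup>2 + A\<^sub>2) / c\<^sup>2 * pi_fun (\<mu> * c)"
  define Gc where "Gc \<omega> = cosh (\<mu> * norm (d (j \<omega>)))" for \<omega>
  define Gs where "Gs \<omega> = sinh (\<mu> * norm (d (j \<omega>)))" for \<omega>
  define L where "L \<omega> = norm_derivative (d (j \<omega>)) (Y \<omega>)" for \<omega>
  have [measurable]: "(\<lambda>\<omega>. d (j \<omega>)) \<in> borel_measurable F"
    by (rule measurable_compose_countable[where f = "\<lambda>i \<omega>. d i"]) auto
  have [measurable]: "(\<lambda>\<omega>. d (j \<omega>)) \<in> borel_measurable M" "j \<in> measurable M (count_space UNIV)"
    by (rule measurable_from_subalg[OF sub], measurable)+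
  have [measurable]: "(\<lambda>\<omega>. norm_derivative x (Y \<omega>)) \<in> borel_measurable M" for x
    by (intro borel_measurable_continuous_on[of "blinfun_apply (norm_derivative x)", OF _
          \<open>Y \<in> borel_measurable M\<close>] continuous_intros)
  have [measurable]: "Gc \<in> borel_measurable F" "Gs \<in> borel_measurable F" "Gc \<in> borel_measurable M"
    "Gs \<in> borel_measurable M"
    unfolding Gc_def Gs_def by measurable
  have [measurable]: "L \<in> borel_measurable M"
    unfolding L_def
    by (rule measurable_compose_countable[where f = "\<lambda>i \<omega>. norm_derivative (d i) (Y \<omega>)"]) auto
  have A\<^sub>1: "norm (norm_derivative x) \<le> A\<^sub>1" for x :: 'b
    using norm_norm_derivative_le[OF smooth] \<open>1 \<le> A\<^sub>1\<close> by simp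
  have L: "\<bar>L \<omega>\<bar> \<le> A\<^sub>1 * c" if "\<omega> \<in> space M" for \<omega>
  proof -
    have "\<bar>L \<omega>\<bar> \<le> norm (norm_derivative (d (j \<omega>))) * norm (Y \<omega>)"
      using norm_blinfun[of "norm_derivative (d (j \<omega>))" "Y \<omega>"] by (simp add: L_def)
    also have "\<dots> \<le> A\<^sub>1 * c"
      using A\<^sub>1 Y[OF that] \<open>1 \<le> A\<^sub>1\<close> by (intro mult_mono) auto
    finally show ?thesis .
  qed
  have G: "0 \<le> Gs \<omega>" "Gs \<omega> \<le> Gc \<omega>" "Gc \<omega> \<le> cosh (\<mu> * K)" if "\<omega> \<in> space M" for \<omega>
    using K[OF that] \<open>0 \<le> \<mu>\<close>
    by (auto simp: Gc_def Gs_def sinh_le_cosh_real intro!: cosh_mono_nonneg mult_left_mono)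
  have bounded: "\<bar>Gc \<omega>\<bar> \<le> cosh (\<mu> * K)" "\<bar>Gs \<omega>\<bar> \<le> cosh (\<mu> * K)"
    "\<bar>Gs \<omega> * L \<omega>\<bar> \<le> cosh (\<mu> * K) * (A\<^sub>1 * c)"
    "\<bar>Gc \<omega> * (norm (Y \<omega>))\<^sup>2\<bar> \<le> cosh (\<mu> * K) * c\<^sup>2" if "\<omega> \<in> space M" for \<omega>
    using G[OF that] L[OF that] Y[OF that] unfolding abs_mult
    by (auto intro!: mult_mono power_mono simp: Gc_def)
  have int: "integrable M Gc" "integrable M Gs" "integrable M (\<lambda>\<omega>. Gs \<omega> * L \<omega>)"
    "integrable M (\<lambda>\<omega>. Gc \<omega> * (norm (Y \<omega>))\<^sup>2)"
    by (rule integrable_abs_bounded, measurable, erule bounded)+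
  have int_lhs: "integrable M (\<lambda>\<omega>. cosh (\<mu> * norm (d (j \<omega>) + Y \<omega>)))"
    using K Y \<open>0 \<le> \<mu>\<close> by (intro integrable_cosh_norm[where b = "K + c"] norm_triangle_le add_mono) auto
  have "(\<integral>\<omega>. cosh (\<mu> * norm (d (j \<omega>) + Y \<omega>)) \<partial>M)
      \<le> (\<integral>\<omega>. Gc \<omega> + \<mu> * (Gs \<omega> * L \<omega>) + \<kappa> * (Gc \<omega> * (norm (Y \<omega>))\<^sup>2) \<partial>M)"
  proof (rule integral_mono)
    fix \<omega> assume "\<omega> \<in> space M"
    from cosh_norm_add_le_quadratic[OF smooth \<open>1 \<le> A\<^sub>1\<close> \<open>0 \<le> A\<^sub>2\<close> \<open>0 \<le> \<mu>\<close> \<open>0 < c\<close> Y[OF this],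
        where x = "d (j \<omega>)"]
    show "cosh (\<mu> * norm (d (j \<omega>) + Y \<omega>)) \<le> Gc \<omega> + \<mu> * (Gs \<omega> * L \<omega>) + \<kappa> * (Gc \<omega> * (norm (Y \<omega>))\<^sup>2)"
      by (simp add: Gc_def Gs_def L_def \<kappa>_def mult_ac)
  qed (use int int_lhs in auto)
  also have "\<dots> = integral\<^sup>L M Gc + \<mu> * (\<integral>\<omega>. Gs \<omega> * L \<omega> \<partial>M) + \<kappa> * (\<integral>\<omega>. Gc \<omega> * (norm (Y \<omega>))\<^sup>2 \<partial>M)"
    using int by simp
  also have "\<dots> \<le> integral\<^sup>L M Gc + \<mu> * (D * A\<^sub>1 * integral\<^sup>L M Gc) + \<kappa> * (V * integral\<^sup>L M Gc)"
  proof (intro add_mono mult_left_mono order_refl)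
    have "(\<integral>\<omega>. Gs \<omega> * L \<omega> \<partial>M) \<le> D * A\<^sub>1 * integral\<^sup>L M Gs"
      unfolding L_def using G Y
      by (intro integral_mult_blinfun_index_le[OF \<open>prob_space M\<close> sub, where B = "cosh (\<mu> * K)"
            and s = "\<lambda>i. norm_derivative (d i)"] A\<^sub>1 \<open>0 \<le> D\<close> lin) (auto intro: order.trans)
    also have "\<dots> \<le> D * A\<^sub>1 * integral\<^sup>L M Gc"
      using G int \<open>0 \<le> D\<close> \<open>1 \<le> A\<^sub>1\<close> by (intro mult_left_mono integral_mono) auto
    finally show "(\<integral>\<omega>. Gs \<omega> * L \<omega> \<partial>M) \<le> D * A\<^sub>1 * integral\<^sup>L M Gc" .
    show "(\<integral>\<omega>. Gc \<omega> * (norm (Y \<omega>))\<^sup>2 \<partial>M) \<le> V * integral\<^sup>L M Gc"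
      using G by (intro cond_exp_leD[OF quad, where B = "cosh (\<mu> * K)"]) (auto simp: Gc_def)
  qed (use \<open>0 \<le> \<mu>\<close> \<open>0 \<le> A\<^sub>2\<close> pi_fun_nonneg[of "\<mu> * c"] in \<open>auto simp: \<kappa>_def\<close>)
  also have "\<dots> = (1 + (A\<^sub>1\<^sup>2 + A\<^sub>2) / c\<^sup>2 * V * pi_fun (\<mu> * c) + \<mu> * A\<^sub>1 * D) * integral\<^sup>L M Gc"
    by (simp add: \<kappa>_def algebra_simps)
  finally show ?thesis
    unfolding Gc_def .
qed

lemma integral_cosh_norm_add_le:
  fixes T Y :: "'a \<Rightarrow> 'b::{banach, second_countable_topology}"
  assumes "prob_space M" and sub: "subalgebra M F"
    and [measurable]: "T \<in> borel_measurable F" and K: "\<And>\<omega>. \<omega> \<in> space M \<Longrightarrow> norm (T \<omega>) \<le> K"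
    and [measurable]: "Y \<in> borel_measurable M" and Y: "\<And>\<omega>. \<omega> \<in> space M \<Longrightarrow> norm (Y \<omega>) \<le> c"
    and "0 < c" and smooth: "gateaux_smooth (norm :: 'b \<Rightarrow> real) A\<^sub>1 A\<^sub>2"
    and "1 \<le> A\<^sub>1" "0 \<le> A\<^sub>2" "0 \<le> \<mu>" "0 \<le> V" "0 \<le> D"
    and quad: "cond_exp_le M F (\<lambda>\<omega>. (norm (Y \<omega>))\<^sup>2) V"
    and lin: "\<And>\<phi> :: 'b \<Rightarrow>\<^sub>L real. cond_exp_le M F (\<lambda>\<omega>. blinfun_apply \<phi> (Y \<omega>)) (D * norm \<phi>)"
  shows "(\<integral>\<omega>. cosh (\<mu> * norm (T \<omega> + Y \<omega>)) \<partial>M)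
    \<le> (1 + (A\<^sub>1\<^sup>2 + A\<^sub>2) / c\<^sup>2 * V * pi_fun (\<mu> * c) + \<mu> * A\<^sub>1 * D) * (\<integral>\<omega>. cosh (\<mu> * norm (T \<omega>)) \<partial>M)"
    (is "?lhs \<le> ?fac * ?rhs")
proof -
  interpret prob_space M by fact
  have [measurable]: "T \<in> borel_measurable M"
    by (rule measurable_from_subalg[OF sub]) measurable
  have approx: "?lhs \<le> exp (2 * \<mu> * e) * (?fac * ?rhs)" if "0 < e" for e
  proof -
    obtain d :: "nat \<Rightarrow> 'b" and j where [measurable]: "j \<in> measurable F (count_space UNIV)"
      and close: "\<And>\<omega>. dist (T \<omega>) (d (j \<omega>)) < e"
      using countable_approximation[OF \<open>T \<in> borel_measurable F\<close> \<open>0 < e\<close>] by blast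
    have close': "norm (T \<omega> - d (j \<omega>)) \<le> e" "norm (d (j \<omega>) - T \<omega>) \<le> e" for \<omega>
      using close[of \<omega>] norm_minus_commute[of "T \<omega>" "d (j \<omega>)"] by (simp_all add: dist_norm)
    have [measurable]: "(\<lambda>\<omega>. d (j \<omega>)) \<in> borel_measurable F"
      by (rule measurable_compose_countable[where f = "\<lambda>i \<omega>. d i"]) auto
    then have [measurable]: "(\<lambda>\<omega>. d (j \<omega>)) \<in> borel_measurable M"
      by (rule measurable_from_subalg[OF sub])
    have K': "norm (d (j \<omega>)) \<le> K + e" if "\<omega> \<in> space M" for \<omega>
      using K[OF that] close'(2)[of \<omega>] norm_triangle_ineq2[of "d (j \<omega>)" "T \<omega>"] by simp
    have [measurable]: "(\<lambda>\<omega>. d (j \<omega>) + Y \<omega>) \<in> borel_measurable M" "(\<lambda>\<omega>. T \<omega> + Y \<omega>) \<in> borel_measurable M"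
      by measurable
    have sums: "norm (T \<omega> + Y \<omega>) \<le> K + c" "norm (d (j \<omega>) + Y \<omega>) \<le> K + e + c"
      if "\<omega> \<in> space M" for \<omega>
      using norm_triangle_le[OF add_mono[OF K Y]] norm_triangle_le[OF add_mono[OF K' Y]] that by auto
    have int: "integrable M (\<lambda>\<omega>. cosh (\<mu> * norm (T \<omega> + Y \<omega>)))"
      "integrable M (\<lambda>\<omega>. cosh (\<mu> * norm (d (j \<omega>) + Y \<omega>)))"
      "integrable M (\<lambda>\<omega>. cosh (\<mu> * norm (T \<omega>)))" "integrable M (\<lambda>\<omega>. cosh (\<mu> * norm (d (j \<omega>))))"
      by (rule integrable_cosh_norm, measurable, (erule sums K K')+, fact)+
    have "0 \<le> ?fac"
      using \<open>0 \<le> \<mu>\<close> \<open>0 \<le> V\<close> \<open>0 \<le> D\<close> \<open>1 \<le> A\<^sub>1\<close> \<open>0 \<le> A\<^sub>2\<close> pi_fun_nonneg[of "\<mu> * c"] by simp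
    have "?lhs \<le> (\<integral>\<omega>. cosh (\<mu> * norm (d (j \<omega>) + Y \<omega>)) * exp (\<mu> * e) \<partial>M)"
      using close' \<open>0 \<le> \<mu>\<close> int by (intro integral_mono cosh_norm_le_mult_exp) auto
    also have "\<dots> \<le> exp (\<mu> * e) * (?fac * (\<integral>\<omega>. cosh (\<mu> * norm (d (j \<omega>))) \<partial>M))"
      using integral_cosh_norm_add_countable_le[where d = d and j = j, OF \<open>prob_space M\<close> sub
          \<open>j \<in> measurable F (count_space UNIV)\<close> K' \<open>Y \<in> borel_measurable M\<close> Y \<open>0 < c\<close> smooth
          \<open>1 \<le> A\<^sub>1\<close> \<open>0 \<le> A\<^sub>2\<close> \<open>0 \<le> \<mu>\<close> \<open>0 \<le> V\<close> \<open>0 \<le> D\<close> quad lin]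
      by (simp add: mult.commute)
    also have "\<dots> \<le> exp (\<mu> * e) * (?fac * (\<integral>\<omega>. cosh (\<mu> * norm (T \<omega>)) * exp (\<mu> * e) \<partial>M))"
      using close' \<open>0 \<le> \<mu>\<close> \<open>0 \<le> ?fac\<close> int
      by (intro mult_left_mono integral_mono cosh_norm_le_mult_exp) auto
    also have "\<dots> = exp (2 * \<mu> * e) * (?fac * ?rhs)"
      by (simp add: mult_exp_exp)
    finally show ?thesis .
  qed
  have "((\<lambda>e. exp (2 * \<mu> * e) * (?fac * ?rhs)) \<longlongrightarrow> exp (2 * \<mu> * 0) * (?fac * ?rhs)) (at_right 0)"
    by (intro tendsto_intros)
  then show ?thesis
    using approx by (intro tendsto_lowerbound[where F = "at_right 0"])
      (auto simp: eventually_at_right_less eventually_mono[OF eventually_at_right_less])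
qed

lemma cond_exp_le_mono:
  assumes "cond_exp_le M F f b" "b \<le> b'" "\<And>\<omega>. \<omega> \<in> space M \<Longrightarrow> f \<omega> = g \<omega>"
  shows "cond_exp_le M F g b'"
proof (rule cond_exp_leI)
  fix G :: "'a \<Rightarrow> real" and B :: real
  assume "G \<in> borel_measurable F" "\<And>\<omega>. \<omega> \<in> space M \<Longrightarrow> 0 \<le> G \<omega>" "\<And>\<omega>. \<omega> \<in> space M \<Longrightarrow> G \<omega> \<le> B"
  then have "(\<integral>\<omega>. G \<omega> * f \<omega> \<partial>M) \<le> b * (\<integral>\<omega>. G \<omega> \<partial>M)" "0 \<le> (\<integral>\<omega>. G \<omega> \<partial>M)"
    using cond_exp_leD[OF assms(1)] by (auto intro: integral_nonneg_AE)
  moreover have "(\<integral>\<omega>. G \<omega> * f \<omega> \<partial>M) = (\<integral>\<omega>. G \<omega> * g \<omega> \<partial>M)"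
    using assms(3) by (intro Bochner_Integration.integral_cong) auto
  ultimately show "(\<integral>\<omega>. G \<omega> * g \<omega> \<partial>M) \<le> b' * (\<integral>\<omega>. G \<omega> \<partial>M)"
    using mult_right_mono[OF assms(2)] by (metis order.trans)
qed

lemma C_classD:
  assumes "C_class c C Cn" "f \<in> C"
  shows "f \<in> borel_measurable borel" "bounded (f ` cball 0 c)" "(\<lambda>x. a * f x) \<in> C" "0 \<le> Cn f"
    "Cn (\<lambda>x. a * f x) = \<bar>a\<bar> * Cn f"
  using assms unfolding C_class_def by blast+

locale C_mixing_process =
  fixes M :: "'a measure"
    and X :: "nat \<Rightarrow> 'a \<Rightarrow> 'b::{banach, second_countable_topology}"
    and C :: "('b \<Rightarrow> real) set" and Cn :: "('b \<Rightarrow> real) \<Rightarrow> real"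
    and c \<sigma>2 C\<^sub>1 C\<^sub>2 :: real and k :: nat
  assumes prob_space_M: "prob_space M"
    and X_meas [measurable]: "\<And>i. 1 \<le> i \<Longrightarrow> X i \<in> borel_measurable M"
    and X_centered: "\<And>i. 1 \<le> i \<Longrightarrow> integral\<^sup>L M (X i) = 0"
    and C_class: "C_class c C Cn" and c_pos: "0 < c"
    and X_bounded: "\<And>i \<omega>. 1 \<le> i \<Longrightarrow> \<omega> \<in> space M \<Longrightarrow> norm (X i \<omega>) \<le> c"
    and X_second_moment: "\<And>i. 1 \<le> i \<Longrightarrow> (\<integral>\<omega>. (norm (X i \<omega>))\<^sup>2 \<partial>M) \<le> \<sigma>2"
    and C\<^sub>1_nonneg: "0 \<le> C\<^sub>1" and C\<^sub>2_nonneg: "0 \<le> C\<^sub>2"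
    and linear_in_C: "\<And>s :: 'b \<Rightarrow>\<^sub>L real. restrX c (blinfun_apply s) \<in> C"
    and linear_C_bound: "\<And>s :: 'b \<Rightarrow>\<^sub>L real. norm s \<le> 1 \<Longrightarrow> Cn (restrX c (blinfun_apply s)) \<le> C\<^sub>1"
    and norm_square_in_C: "restrX c (\<lambda>x. (norm x)\<^sup>2) \<in> C"
    and norm_square_C_bound: "Cn (restrX c (\<lambda>x. (norm x)\<^sup>2)) \<le> C\<^sub>2"
    and mixing_finite: "C_mixing_coeff M X C Cn k < \<infinity>"
begin

interpretation prob_space M by (rule prob_space_M)

definition \<Phi> :: real where
  "\<Phi> = real_of_ereal (C_mixing_coeff M X C Cn k)"

lemma sigma2_nonneg: "0 \<le> \<sigma>2"
proof -
  have "0 \<le> (\<integral>\<omega>. (norm (X 1 \<omega>))\<^sup>2 \<partial>M)"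
    by (intro integral_nonneg_AE) simp
  then show ?thesis
    using X_second_moment[of 1] by linarith
qed

lemma sets_nat_filt:
  "sets (nat_filt M X i) = sigma_sets (space M) (\<Union>j\<in>{1..i}. {X j -` A \<inter> space M | A. A \<in> sets borel})"
  and space_nat_filt: "space (nat_filt M X i) = space M"
  unfolding nat_filt_def by (subst sets_measure_of space_measure_of; auto)+

lemma subalgebra_nat_filt: "subalgebra M (nat_filt M X i)"
  unfolding subalgebra_def sets_nat_filt space_nat_filt
  by (auto intro!: sets.sigma_sets_subset measurable_sets)

lemma sigma_finite_subalgebra_nat_filt: "sigma_finite_subalgebra M (nat_filt M X i)"
  by (intro finite_measure_subalgebra_is_sigma_finite finite_measure_subalgebra.intro
      finite_measure_subalgebra_axioms.intro finite_measure_axioms subalgebra_nat_filt)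

lemma X_measurable_nat_filt: "1 \<le> j \<Longrightarrow> j \<le> i \<Longrightarrow> X j \<in> borel_measurable (nat_filt M X i)"
  by (intro measurableI) (auto simp: sets_nat_filt space_nat_filt intro!: sigma_sets.Basic bexI[of _ j] exI)

lemma C_measurable: "\<phi> \<in> C \<Longrightarrow> 1 \<le> i \<Longrightarrow> (\<lambda>\<omega>. \<phi> (X i \<omega>)) \<in> borel_measurable M"
  using measurable_comp[OF X_meas C_classD(1)[OF C_class]] by (simp add: comp_def)

lemma C_integrable:
  assumes "\<phi> \<in> C" "1 \<le> i"
  shows "integrable M (\<lambda>\<omega>. \<phi> (X i \<omega>))"
proof -
  obtain b where "\<And>x. x \<in> cball 0 c \<Longrightarrow> norm (\<phi> x) \<le> b"
    using C_classD(2)[OF C_class assms(1)] unfolding bounded_iff by blast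
  then show ?thesis
    using C_measurable[OF assms] X_bounded[OF assms(2)]
    by (intro integrable_const_bound[where B = b]) auto
qed

lemma mixing_coeff_nonneg: "0 \<le> C_mixing_coeff M X C Cn k"
proof -
  have "(\<lambda>x. 0) \<in> C" "Cn (\<lambda>x. 0) = 0"
    using C_class C_classD(5)[OF C_class, of "\<lambda>x. 0" 0] unfolding C_class_def by auto
  then have "((\<lambda>x. 0), 1) \<in> {(\<phi>, i). \<phi> \<in> C \<and> Cn \<phi> \<le> 1 \<and> 1 \<le> (i::nat)}"
    by simp
  then have "esssup M (\<lambda>\<omega>. ereal \<bar>real_cond_exp M (nat_filt M X 1) (\<lambda>\<omega>. 0) \<omega> - 0\<bar>)
      \<le> C_mixing_coeff M X C Cn k"
    unfolding C_mixing_coeff_def by (rule SUP_upper2) simp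
  moreover have "esssup M (\<lambda>\<omega>. 0) \<le> esssup M (\<lambda>\<omega>. ereal \<bar>real_cond_exp M (nat_filt M X 1) (\<lambda>\<omega>. 0) \<omega> - 0\<bar>)"
    by (rule esssup_mono) auto
  ultimately show ?thesis
    by (simp add: esssup_const emeasure_space_1)
qed

lemma mixing_coeff_eq: "C_mixing_coeff M X C Cn k = ereal \<Phi>"
  using mixing_coeff_nonneg mixing_finite by (cases "C_mixing_coeff M X C Cn k") (auto simp: \<Phi>_def)

lemma Phi_nonneg: "0 \<le> \<Phi>"
  using mixing_coeff_nonneg by (simp add: mixing_coeff_eq)

lemma real_cond_exp_mixing_unit:
  assumes "\<phi> \<in> C" "Cn \<phi> \<le> 1" "1 \<le> i"
  shows "AE \<omega> in M. \<bar>real_cond_exp M (nat_filt M X i) (\<lambda>\<omega>. \<phi> (X (i + k) \<omega>)) \<omega>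
      - (\<integral>\<omega>. \<phi> (X (i + k) \<omega>) \<partial>M)\<bar> \<le> \<Phi>"
proof -
  let ?f = "\<lambda>\<omega>. ereal \<bar>real_cond_exp M (nat_filt M X i) (\<lambda>\<omega>. \<phi> (X (i + k) \<omega>)) \<omega>
      - (\<integral>\<omega>. \<phi> (X (i + k) \<omega>) \<partial>M)\<bar>"
  have le: "esssup M ?f \<le> ereal \<Phi>"
    unfolding mixing_coeff_eq[symmetric] C_mixing_coeff_def
    by (rule SUP_upper2[of "(\<phi>, i)"]) (use assms in auto)
  from esssup_AE[of ?f M] show ?thesis
  proof eventually_elim
    case (elim \<omega>)
    from order.trans[OF elim le] show ?case by simp
  qed
qed

text \<open>Scaling \<open>\<phi>\<close> by \<open>1 / (Cn \<phi> + \<epsilon>)\<close> brings it into the unit ball of \<open>Cn\<close> even when \<open>Cn \<phi> = 0\<close>.\<close>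
lemma real_cond_exp_le_mixing:
  assumes "\<phi> \<in> C" "1 \<le> i"
  shows "AE \<omega> in M. real_cond_exp M (nat_filt M X i) (\<lambda>\<omega>. \<phi> (X (i + k) \<omega>)) \<omega>
      \<le> (\<integral>\<omega>. \<phi> (X (i + k) \<omega>) \<partial>M) + Cn \<phi> * \<Phi>"
proof -
  interpret sigma_finite_subalgebra M "nat_filt M X i"
    by (rule sigma_finite_subalgebra_nat_filt)
  define E where "E = real_cond_exp M (nat_filt M X i) (\<lambda>\<omega>. \<phi> (X (i + k) \<omega>))"
  define m where "m = (\<integral>\<omega>. \<phi> (X (i + k) \<omega>) \<partial>M)"
  have int: "integrable M (\<lambda>\<omega>. \<phi> (X (i + k) \<omega>))"
    using C_integrable assms by simp
  have "AE \<omega> in M. E \<omega> - m \<le> \<Phi> * (Cn \<phi> + 1 / Suc n)" for n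
  proof -
    define t where "t = 1 / (Cn \<phi> + 1 / Suc n)"
    have "0 < Cn \<phi> + 1 / Suc n"
      using C_classD(4)[OF C_class assms(1)] by (simp add: add_nonneg_pos)
    then have "0 < t" and "t * Cn \<phi> \<le> 1"
      by (simp_all add: t_def field_simps)
    then have "Cn (\<lambda>x. t * \<phi> x) \<le> 1"
      using C_classD(5)[OF C_class assms(1), of t] by simp
    from real_cond_exp_mixing_unit[OF C_classD(3)[OF C_class assms(1)] this assms(2)]
      real_cond_exp_cmult[OF int, of t]
    show ?thesis
    proof eventually_elim
      case (elim \<omega>)
      then have "t * (E \<omega> - m) \<le> \<Phi>"
        by (simp add: E_def m_def right_diff_distrib)
      then have "E \<omega> - m \<le> \<Phi> / t"
        using \<open>0 < t\<close> by (simp add: le_divide_eq mult.commute)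
      then show ?case
        by (simp add: t_def)
    qed
  qed
  then have "AE \<omega> in M. \<forall>n. E \<omega> - m \<le> \<Phi> * (Cn \<phi> + 1 / Suc n)"
    by (simp add: AE_all_countable)
  then show ?thesis
  proof eventually_elim
    case (elim \<omega>)
    have "(\<lambda>n. \<Phi> * (Cn \<phi> + 1 / Suc n)) \<longlonglongrightarrow> \<Phi> * (Cn \<phi> + 0)"
      by (intro tendsto_intros LIMSEQ_Suc[OF lim_inverse_n'])
    with elim have "E \<omega> - m \<le> \<Phi> * (Cn \<phi> + 0)"
      by (intro LIMSEQ_le_const) auto
    then show ?case
      by (simp add: E_def m_def mult.commute)
  qed
qed

lemma cond_exp_le_mixing:
  assumes "\<phi> \<in> C" "1 \<le> i"
  shows "cond_exp_le M (nat_filt M X i) (\<lambda>\<omega>. \<phi> (X (i + k) \<omega>))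
    ((\<integral>\<omega>. \<phi> (X (i + k) \<omega>) \<partial>M) + Cn \<phi> * \<Phi>)"
proof (rule cond_exp_leI)
  interpret sigma_finite_subalgebra M "nat_filt M X i"
    by (rule sigma_finite_subalgebra_nat_filt)
  fix G :: "'a \<Rightarrow> real" and B :: real
  assume G [measurable]: "G \<in> borel_measurable (nat_filt M X i)"
    and G_bounds: "\<And>\<omega>. \<omega> \<in> space M \<Longrightarrow> 0 \<le> G \<omega>" "\<And>\<omega>. \<omega> \<in> space M \<Longrightarrow> G \<omega> \<le> B"
  define E where "E = real_cond_exp M (nat_filt M X i) (\<lambda>\<omega>. \<phi> (X (i + k) \<omega>))"
  define m where "m = (\<integral>\<omega>. \<phi> (X (i + k) \<omega>) \<partial>M) + Cn \<phi> * \<Phi>"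
  have [measurable]: "G \<in> borel_measurable M"
    by (rule measurable_from_subalg[OF subalgebra_nat_filt G])
  have "1 \<le> i + k"
    using assms by simp
  obtain b where b: "\<And>x. x \<in> cball 0 c \<Longrightarrow> norm (\<phi> x) \<le> b"
    using C_classD(2)[OF C_class assms(1)] unfolding bounded_iff by blast
  have int_G: "integrable M G"
    using G_bounds by (intro integrable_abs_bounded[where b = B]) (auto intro: order.trans)
  obtain \<omega>\<^sub>0 where "\<omega>\<^sub>0 \<in> space M"
    using not_empty by blast
  then have "0 \<le> B"
    using G_bounds by (meson order.trans)
  have int: "integrable M (\<lambda>\<omega>. G \<omega> * \<phi> (X (i + k) \<omega>))"
    using G_bounds \<open>0 \<le> B\<close> b X_bounded[OF \<open>1 \<le> i + k\<close>] C_measurable[OF assms(1) \<open>1 \<le> i + k\<close>]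
    by (intro integrable_abs_bounded[where b = "B * b"]) (auto simp: abs_mult intro!: mult_mono)
  have "(\<integral>\<omega>. G \<omega> * \<phi> (X (i + k) \<omega>) \<partial>M) = (\<integral>\<omega>. G \<omega> * E \<omega> \<partial>M)"
    unfolding E_def
    by (rule real_cond_exp_intg(2)[symmetric, OF int G C_measurable[OF assms(1) \<open>1 \<le> i + k\<close>]])
  also have "\<dots> \<le> (\<integral>\<omega>. m * G \<omega> \<partial>M)"
  proof (rule integral_mono_AE)
    show "integrable M (\<lambda>\<omega>. G \<omega> * E \<omega>)"
      unfolding E_def by (rule real_cond_exp_intg(1)[OF int G C_measurable[OF assms(1) \<open>1 \<le> i + k\<close>]])
    show "AE \<omega> in M. G \<omega> * E \<omega> \<le> m * G \<omega>"
      using real_cond_exp_le_mixing[OF assms] AE_space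
    proof eventually_elim
      case (elim \<omega>)
      then show ?case
        using G_bounds(1)[of \<omega>] mult_left_mono by (fastforce simp: E_def m_def mult.commute)
    qed
  qed (use int_G in simp)
  finally show "(\<integral>\<omega>. G \<omega> * \<phi> (X (i + k) \<omega>) \<partial>M) \<le> m * integral\<^sup>L M G"
    by simp
qed

lemma cond_exp_le_norm_square:
  assumes "1 \<le> i"
  shows "cond_exp_le M (nat_filt M X i) (\<lambda>\<omega>. (norm (X (i + k) \<omega>))\<^sup>2) (\<sigma>2 + C\<^sub>2 * \<Phi>)"
proof -
  let ?h = "restrX c (\<lambda>x. (norm x)\<^sup>2)"
  have h: "?h (X (i + k) \<omega>) = (norm (X (i + k) \<omega>))\<^sup>2" if "\<omega> \<in> space M" for \<omega>
    using X_bounded[OF _ that, of "i + k"] assms by (simp add: restrX_def)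
  have "(\<integral>\<omega>. ?h (X (i + k) \<omega>) \<partial>M) + Cn ?h * \<Phi> \<le> \<sigma>2 + C\<^sub>2 * \<Phi>"
    using X_second_moment[of "i + k"] assms h norm_square_C_bound Phi_nonneg
    by (intro add_mono mult_right_mono) (simp_all cong: Bochner_Integration.integral_cong)
  from cond_exp_le_mono[OF cond_exp_le_mixing[OF norm_square_in_C assms] this h] show ?thesis .
qed

lemma cond_exp_le_linear:
  assumes "1 \<le> i"
  shows "cond_exp_le M (nat_filt M X i) (\<lambda>\<omega>. blinfun_apply s (X (i + k) \<omega>)) (C\<^sub>1 * \<Phi> * norm s)"
proof -
  let ?h = "restrX c (blinfun_apply s)"
  have h: "?h (X (i + k) \<omega>) = s (X (i + k) \<omega>)" if "\<omega> \<in> space M" for \<omega>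
    using X_bounded[OF _ that, of "i + k"] assms by (simp add: restrX_def)
  have "integrable M (X (i + k))"
    using X_bounded[of "i + k"] assms by (intro integrable_const_bound[where B = c]) auto
  then have "(\<integral>\<omega>. s (X (i + k) \<omega>) \<partial>M) = s (integral\<^sup>L M (X (i + k)))"
    by (rule integral_bounded_linear[OF blinfun.bounded_linear_right])
  then have "(\<integral>\<omega>. ?h (X (i + k) \<omega>) \<partial>M) = 0"
    using X_centered[of "i + k"] assms h by (simp cong: Bochner_Integration.integral_cong)
  moreover have "Cn ?h \<le> norm s * C\<^sub>1"
  proof (cases "s = 0")
    case True
    then show ?thesis
      using C_classD(5)[OF C_class linear_in_C[of 0], of 0] by (simp add: restrX_def cong: if_cong)
  next
    case False
    have "?h = (\<lambda>x. norm s * restrX c (blinfun_apply ((1 / norm s) *\<^sub>R s)) x)"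
      using False by (simp add: restrX_def fun_eq_iff blinfun.scaleR_left)
    then show ?thesis
      using C_classD(5)[OF C_class linear_in_C, of "norm s" "(1 / norm s) *\<^sub>R s"]
        linear_C_bound[of "(1 / norm s) *\<^sub>R s"] False by (simp add: mult_left_mono)
  qed
  ultimately have "(\<integral>\<omega>. ?h (X (i + k) \<omega>) \<partial>M) + Cn ?h * \<Phi> \<le> C\<^sub>1 * \<Phi> * norm s"
    using mult_right_mono[OF _ Phi_nonneg, of "Cn ?h" "norm s * C\<^sub>1"] by (simp add: mult_ac)
  from cond_exp_le_mono[OF cond_exp_le_mixing[OF linear_in_C assms] this h] show ?thesis .
qed

end

definition block_sum :: "nat \<Rightarrow> nat \<Rightarrow> nat \<Rightarrow> (nat \<Rightarrow> 'b::comm_monoid_add) \<Rightarrow> nat \<Rightarrow> 'b" where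
  "block_sum k n m x j = (\<Sum>q | q \<le> m \<and> j + q * k \<le> n. x (j + q * k))"

lemma block_sum_0: "block_sum k n 0 x j = (if j \<le> n then x j else 0)"
proof -
  have "{q. q \<le> 0 \<and> j + q * k \<le> n} = (if j \<le> n then {0} else {})"
    by auto
  then show ?thesis
    by (simp add: block_sum_def)
qed

lemma block_sum_Suc:
  "block_sum k n (Suc m) x j = block_sum k n m x j + (if j + Suc m * k \<le> n then x (j + Suc m * k) else 0)"
proof -
  have "{q. q \<le> Suc m \<and> j + q * k \<le> n} =
      {q. q \<le> m \<and> j + q * k \<le> n} \<union> (if j + Suc m * k \<le> n then {Suc m} else {})"
    by (auto simp: le_Suc_eq)
  then show ?thesis
    by (simp add: block_sum_def add.commute)
qed

lemma norm_block_sum_le: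
  fixes x :: "nat \<Rightarrow> 'b::real_normed_vector" and c :: real
  assumes "\<And>i. 1 \<le> i \<Longrightarrow> norm (x i) \<le> c" "1 \<le> j" "0 \<le> c"
  shows "norm (block_sum k n m x j) \<le> real (Suc m) * c"
proof (induction m)
  case 0
  then show ?case
    using assms by (simp add: block_sum_0)
next
  case (Suc m)
  have "norm (block_sum k n (Suc m) x j) \<le> norm (block_sum k n m x j) + c"
    using assms(1)[of "j + Suc m * k"] assms(2,3)
    by (auto simp: block_sum_Suc intro!: norm_triangle_le add_mono)
  with Suc show ?case
    by (simp add: algebra_simps)
qed

lemma sum_eq_sum_block_sum:
  assumes "0 < k" "n < Suc l * k"
  shows "(\<Sum>i = 1..n. x i) = (\<Sum>j = 1..k. block_sum k n l x j)"
proof -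
  define S where "S = (SIGMA j:{1..k}. {q. q \<le> l \<and> j + q * k \<le> n})"
  have "bij_betw (\<lambda>(j, q). j + q * k) S {1..n}"
  proof (rule bij_betw_byWitness[where f' = "\<lambda>i. ((i - 1) mod k + 1, (i - 1) div k)"])
    have "(j + q * k - 1) mod k + 1 = j \<and> (j + q * k - 1) div k = q" if j: "1 \<le> j" "j \<le> k" for j q
    proof -
      obtain j' where "j = Suc j'"
        using j(1) by (cases j) simp_all
      then show ?thesis
        using j(2) by simp
    qed
    then show "\<forall>p\<in>S. (\<lambda>i. ((i - 1) mod k + 1, (i - 1) div k)) ((\<lambda>(j, q). j + q * k) p) = p"
      by (auto simp: S_def)
    show "\<forall>i\<in>{1..n}. (\<lambda>(j, q). j + q * k) ((i - 1) mod k + 1, (i - 1) div k) = i"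
      by (auto simp: mod_div_mult_eq[of "_ - 1" k, simplified])
    show "(\<lambda>(j, q). j + q * k) ` S \<subseteq> {1..n}"
      by (auto simp: S_def)
    have "(i - 1) div k \<le> l" if "i \<le> n" for i
    proof -
      have "i - 1 < Suc l * k"
        using assms(2) that by linarith
      then show ?thesis
        using less_mult_imp_div_less less_Suc_eq_le by blast
    qed
    then show "(\<lambda>i. ((i - 1) mod k + 1, (i - 1) div k)) ` {1..n} \<subseteq> S"
      using assms(1) by (auto simp: S_def mod_div_mult_eq[of "_ - 1" k, simplified] Suc_le_eq)
  qed
  then have "(\<Sum>i = 1..n. x i) = (\<Sum>(j, q)\<in>S. x (j + q * k))"
    by (simp add: sum.reindex_bij_betw[symmetric] case_prod_unfold)
  also have "\<dots> = (\<Sum>j = 1..k. block_sum k n l x j)"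
    unfolding S_def block_sum_def by (subst sum.Sigma) auto
  finally show ?thesis .
qed

lemma exp_mean_le_mean_exp:
  assumes "finite S" "S \<noteq> {}"
  shows "exp ((\<Sum>j\<in>S. a j) / card S) \<le> (\<Sum>j\<in>S. exp (a j)) / card S"
proof -
  have "exp (\<Sum>j\<in>S. (1 / card S) *\<^sub>R a j) \<le> (\<Sum>j\<in>S. (1 / card S) * exp (a j))"
    using assms by (intro convex_on_sum[OF assms exp_convex]) auto
  then show ?thesis
    by (simp add: sum_divide_distrib)
qed

text \<open>Each block has at most \<open>l + 1\<close> terms, whereas the mean divides by \<open>n \<ge> l k\<close>; this is where
  the factor \<open>1 / l\<close> in the exponent comes from.\<close>
lemma exp_norm_mean_le_blocks:
  fixes x :: "nat \<Rightarrow> 'b::real_normed_vector"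
  assumes "0 < k" "0 < l" "n = l * k + r" "r < k" "0 \<le> lam"
  shows "exp (lam * norm ((1 / real n) *\<^sub>R (\<Sum>i = 1..n. x i)))
    \<le> (\<Sum>j = 1..k. 2 * cosh (lam / l * norm (block_sum k n l x j))) / k"
proof -
  have "0 < n" "n < Suc l * k" "real l * real k \<le> real n" "0 < real l * real k"
    using assms by auto
  then have "lam / n \<le> lam / (l * k)"
    using \<open>0 \<le> lam\<close> by (intro divide_left_mono mult_pos_pos) simp_all
  then have "lam / n \<le> lam / l / k"
    by simp
  have "lam * norm ((1 / real n) *\<^sub>R (\<Sum>i = 1..n. x i)) = lam / n * norm (\<Sum>j = 1..k. block_sum k n l x j)"
    using sum_eq_sum_block_sum[OF \<open>0 < k\<close> \<open>n < Suc l * k\<close>, where x = x] \<open>0 < n\<close> \<open>0 \<le> lam\<close> by simp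
  also have "\<dots> \<le> lam / n * (\<Sum>j = 1..k. norm (block_sum k n l x j))"
    using \<open>0 \<le> lam\<close> by (intro mult_left_mono norm_sum) auto
  also have "\<dots> \<le> lam / l / k * (\<Sum>j = 1..k. norm (block_sum k n l x j))"
    using \<open>lam / n \<le> lam / l / k\<close> by (intro mult_right_mono sum_nonneg) auto
  also have "\<dots> = (\<Sum>j = 1..k. lam / l * norm (block_sum k n l x j)) / card {1..k}"
    by (simp add: sum_distrib_left sum_divide_distrib)
  finally have "exp (lam * norm ((1 / real n) *\<^sub>R (\<Sum>i = 1..n. x i)))
      \<le> exp ((\<Sum>j = 1..k. lam / l * norm (block_sum k n l x j)) / card {1..k})"
    by simp
  also have "\<dots> \<le> (\<Sum>j = 1..k. exp (lam / l * norm (block_sum k n l x j))) / card {1..k}"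
    using \<open>0 < k\<close> by (intro exp_mean_le_mean_exp) auto
  also have "\<dots> \<le> (\<Sum>j = 1..k. 2 * cosh (lam / l * norm (block_sum k n l x j))) / k"
    unfolding card_atLeastAtMost diff_Suc_1 by (intro divide_right_mono sum_mono) (auto simp: cosh_def)
  finally show ?thesis .
qed

context C_mixing_process
begin

interpretation prob_space M by (rule prob_space_M)

lemma integral_cosh_norm_X_le:
  assumes smooth: "gateaux_smooth (norm :: 'b \<Rightarrow> real) A\<^sub>1 A\<^sub>2"
    and "1 \<le> A\<^sub>1" "0 \<le> A\<^sub>2" "0 \<le> \<mu>" "1 \<le> j"
  shows "(\<integral>\<omega>. cosh (\<mu> * norm (X j \<omega>)) \<partial>M) \<le> 1 + (A\<^sub>1\<^sup>2 + A\<^sub>2) / c\<^sup>2 * \<sigma>2 * pi_fun (\<mu> * c)"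
proof -
  define \<kappa> where "\<kappa> = (A\<^sub>1\<^sup>2 + A\<^sub>2) / c\<^sup>2 * pi_fun (\<mu> * c)"
  have int: "integrable M (\<lambda>\<omega>. (norm (X j \<omega>))\<^sup>2)"
    using X_bounded[OF \<open>1 \<le> j\<close>] \<open>1 \<le> j\<close>
    by (intro integrable_abs_bounded[where b = "c\<^sup>2"]) (auto intro: power_mono)
  have "(\<integral>\<omega>. cosh (\<mu> * norm (X j \<omega>)) \<partial>M) \<le> (\<integral>\<omega>. 1 + \<kappa> * (norm (X j \<omega>))\<^sup>2 \<partial>M)"
  proof (rule integral_mono)
    show "integrable M (\<lambda>\<omega>. cosh (\<mu> * norm (X j \<omega>)))"
      using X_bounded \<open>0 \<le> \<mu>\<close> \<open>1 \<le> j\<close> by (intro integrable_cosh_norm) auto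
    fix \<omega> assume "\<omega> \<in> space M"
    from cosh_norm_add_le_quadratic[OF smooth \<open>1 \<le> A\<^sub>1\<close> \<open>0 \<le> A\<^sub>2\<close> \<open>0 \<le> \<mu>\<close> c_pos
        X_bounded[OF \<open>1 \<le> j\<close> this], where x = 0]
    show "cosh (\<mu> * norm (X j \<omega>)) \<le> 1 + \<kappa> * (norm (X j \<omega>))\<^sup>2"
      by (simp add: \<kappa>_def mult_ac)
  qed (use int in simp)
  also have "\<dots> = 1 + \<kappa> * (\<integral>\<omega>. (norm (X j \<omega>))\<^sup>2 \<partial>M)"
    using int by (simp add: prob_space)
  also have "\<dots> \<le> 1 + \<kappa> * \<sigma>2"
    using X_second_moment[OF \<open>1 \<le> j\<close>] \<open>0 \<le> A\<^sub>2\<close> pi_fun_nonneg[of "\<mu> * c"]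
    by (intro add_left_mono mult_left_mono) (simp_all add: \<kappa>_def)
  finally show ?thesis
    by (simp add: \<kappa>_def mult_ac)
qed

lemma integral_cosh_block_sum_le:
  assumes smooth: "gateaux_smooth (norm :: 'b \<Rightarrow> real) A\<^sub>1 A\<^sub>2"
    and "1 \<le> A\<^sub>1" "0 \<le> A\<^sub>2" "0 \<le> \<mu>" "1 \<le> j"
  shows "(\<integral>\<omega>. cosh (\<mu> * norm (block_sum k n m (\<lambda>i. X i \<omega>) j)) \<partial>M)
    \<le> (1 + (A\<^sub>1\<^sup>2 + A\<^sub>2) / c\<^sup>2 * \<sigma>2 * pi_fun (\<mu> * c))
      * (1 + (A\<^sub>1\<^sup>2 + A\<^sub>2) / c\<^sup>2 * (\<sigma>2 + C\<^sub>2 * \<Phi>) * pi_fun (\<mu> * c) + \<mu> * A\<^sub>1 * (C\<^sub>1 * \<Phi>)) ^ m"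
    (is "?I m \<le> ?a * ?f ^ m")
proof (induction m)
  have "1 \<le> ?a"
    using \<open>0 \<le> A\<^sub>2\<close> sigma2_nonneg pi_fun_nonneg[of "\<mu> * c"] by simp
  then show "?I 0 \<le> ?a * ?f ^ 0"
    using integral_cosh_norm_X_le[OF assms] by (cases "j \<le> n") (simp_all add: block_sum_0 prob_space)
next
  case (Suc m)
  have "1 \<le> ?f"
    using \<open>0 \<le> A\<^sub>2\<close> \<open>1 \<le> A\<^sub>1\<close> \<open>0 \<le> \<mu>\<close> sigma2_nonneg Phi_nonneg C\<^sub>1_nonneg C\<^sub>2_nonneg
      pi_fun_nonneg[of "\<mu> * c"] by simp
  show ?case
  proof (cases "j + Suc m * k \<le> n")
    case True
    define i where "i = j + m * k"
    then have "1 \<le> i" "1 \<le> i + k" and i_k: "j + Suc m * k = i + k"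
      using \<open>1 \<le> j\<close> by auto
    have [measurable]: "(\<lambda>\<omega>. block_sum k n m (\<lambda>i. X i \<omega>) j) \<in> borel_measurable (nat_filt M X i)"
      unfolding block_sum_def using \<open>1 \<le> j\<close>
      by (intro borel_measurable_sum X_measurable_nat_filt) (auto simp: i_def)
    have K: "norm (block_sum k n m (\<lambda>i. X i \<omega>) j) \<le> real (Suc m) * c" if "\<omega> \<in> space M" for \<omega>
      using X_bounded[OF _ that] \<open>1 \<le> j\<close> c_pos by (intro norm_block_sum_le) auto
    from integral_cosh_norm_add_le[where T = "\<lambda>\<omega>. block_sum k n m (\<lambda>i. X i \<omega>) j",
        OF prob_space_M subalgebra_nat_filt _ K X_meas[OF \<open>1 \<le> i + k\<close>]
        X_bounded[OF \<open>1 \<le> i + k\<close>] c_pos smooth \<open>1 \<le> A\<^sub>1\<close> \<open>0 \<le> A\<^sub>2\<close> \<open>0 \<le> \<mu>\<close> _ _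
        cond_exp_le_norm_square[OF \<open>1 \<le> i\<close>] cond_exp_le_linear[OF \<open>1 \<le> i\<close>]]
    have "?I (Suc m) \<le> ?f * ?I m"
      unfolding block_sum_Suc i_k using True[unfolded i_k] sigma2_nonneg Phi_nonneg C\<^sub>1_nonneg C\<^sub>2_nonneg
      by (simp add: mult_ac)
    also have "\<dots> \<le> ?f * (?a * ?f ^ m)"
      using Suc \<open>1 \<le> ?f\<close> by (intro mult_left_mono) auto
    finally show ?thesis
      by (simp add: mult_ac)
  next
    case False
    have "?I (Suc m) \<le> ?a * ?f ^ m"
      using Suc False by (simp add: block_sum_Suc)
    also have "\<dots> \<le> ?a * ?f ^ Suc m"
      using \<open>1 \<le> ?f\<close> \<open>0 \<le> A\<^sub>2\<close> sigma2_nonneg pi_fun_nonneg[of "\<mu> * c"]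
      by (intro mult_left_mono power_increasing) auto
    finally show ?thesis .
  qed
qed

lemma integral_exp_norm_mean_le:
  assumes smooth: "gateaux_smooth (norm :: 'b \<Rightarrow> real) A\<^sub>1 A\<^sub>2"
    and "1 \<le> A\<^sub>1" "0 \<le> A\<^sub>2" "n = l * k + r" "0 < l" "0 < k" "r < k" "0 \<le> lam"
  shows "(\<integral>\<omega>. exp (lam * norm ((1 / real n) *\<^sub>R (\<Sum>i = 1..n. X i \<omega>))) \<partial>M)
    \<le> 2 * ((1 + (A\<^sub>1\<^sup>2 + A\<^sub>2) / c\<^sup>2 * \<sigma>2 * pi_fun (lam / l * c))
      * (1 + (A\<^sub>1\<^sup>2 + A\<^sub>2) / c\<^sup>2 * (\<sigma>2 + C\<^sub>2 * \<Phi>) * pi_fun (lam / l * c) + lam / l * A\<^sub>1 * (C\<^sub>1 * \<Phi>)) ^ l)"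
    (is "_ \<le> 2 * ?bound")
proof -
  define P where "P j \<omega> = block_sum k n l (\<lambda>i. X i \<omega>) j" for j \<omega>
  have "0 \<le> lam / l"
    using \<open>0 \<le> lam\<close> by simp
  have int: "integrable M (\<lambda>\<omega>. cosh (lam / l * norm (P j \<omega>)))" if "1 \<le> j" for j
  proof (rule integrable_cosh_norm[OF _ _ \<open>0 \<le> lam / l\<close>])
    show "(\<lambda>\<omega>. P j \<omega>) \<in> borel_measurable M"
      unfolding P_def block_sum_def using that by (intro borel_measurable_sum X_meas) auto
    show "norm (P j \<omega>) \<le> real (Suc l) * c" if "\<omega> \<in> space M" for \<omega>
      unfolding P_def using X_bounded[OF _ \<open>\<omega> \<in> space M\<close>] \<open>1 \<le> j\<close> c_pos
      by (intro norm_block_sum_le) auto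
  qed
  have "(\<integral>\<omega>. exp (lam * norm ((1 / real n) *\<^sub>R (\<Sum>i = 1..n. X i \<omega>))) \<partial>M)
      \<le> (\<integral>\<omega>. (\<Sum>j = 1..k. 2 * cosh (lam / l * norm (P j \<omega>))) / k \<partial>M)"
  proof (rule integral_mono')
    show "integrable M (\<lambda>\<omega>. (\<Sum>j = 1..k. 2 * cosh (lam / l * norm (P j \<omega>))) / k)"
      by (rule integrable_divide_zero, rule Bochner_Integration.integrable_sum, rule integrable_mult_right,
          rule int) auto
    show "exp (lam * norm ((1 / real n) *\<^sub>R (\<Sum>i = 1..n. X i \<omega>)))
        \<le> (\<Sum>j = 1..k. 2 * cosh (lam / l * norm (P j \<omega>))) / k" for \<omega>
      unfolding P_def by (rule exp_norm_mean_le_blocks[OF \<open>0 < k\<close> \<open>0 < l\<close> \<open>n = l * k + r\<close> \<open>r < k\<close> \<open>0 \<le> lam\<close>])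
  qed (auto intro!: divide_nonneg_nonneg sum_nonneg)
  also have "\<dots> = (\<Sum>j = 1..k. 2 * (\<integral>\<omega>. cosh (lam / l * norm (P j \<omega>)) \<partial>M)) / k"
    using int by simp
  also have "\<dots> \<le> (\<Sum>j = 1..k. 2 * ?bound) / k"
    using integral_cosh_block_sum_le[OF smooth \<open>1 \<le> A\<^sub>1\<close> \<open>0 \<le> A\<^sub>2\<close> \<open>0 \<le> lam / l\<close>]
    by (intro divide_right_mono sum_mono) (auto simp: P_def mult_ac)
  also have "\<dots> = 2 * ?bound"
    using \<open>0 < k\<close> by simp
  finally show ?thesis .
qed

end

theorem lemmaA2:
  fixes M :: "'a measure"
    and X :: "nat \<Rightarrow> 'a \<Rightarrow> 'b::{banach, second_countable_topology}"
    and C :: "('b \<Rightarrow> real) set" and Cn :: "('b \<Rightarrow> real) \<Rightarrow> real"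
    and c \<sigma>2 A\<^sub>1 A\<^sub>2 C\<^sub>1 C\<^sub>2 lam :: real
    and n l k r :: nat
  assumes M: "prob_space M"
    and X_meas: "\<And>i. 1 \<le> i \<Longrightarrow> X i \<in> borel_measurable M"
    and X_centered: "\<And>i. 1 \<le> i \<Longrightarrow> integral\<^sup>L M (X i) = 0"
    and C: "C_class c C Cn"
    \<comment> \<open>Assumption A1\<close>
    and A1_ge: "1 \<le> A\<^sub>1" and A2_pos: "0 < A\<^sub>2"
    and A1: "\<And>(x::'b) v. x \<noteq> 0 \<Longrightarrow>
        (\<exists>D. (gateaux_line norm x v has_real_derivative D) (at 0) \<and> \<bar>D\<bar> \<le> A\<^sub>1 * norm v)
      \<and> (\<exists>D2. ((\<lambda>t. deriv (gateaux_line norm x v) t) has_real_derivative D2) (at 0)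
              \<and> \<bar>D2\<bar> \<le> A\<^sub>2 * (norm v)\<^sup>2 / norm x)"
    \<comment> \<open>Assumption A2\<close>
    and c_pos: "0 < c" and sigma_pos: "0 < \<sigma>2"
    and X_bdd: "\<And>i \<omega>. 1 \<le> i \<Longrightarrow> \<omega> \<in> space M \<Longrightarrow> norm (X i \<omega>) \<le> c"
    and X_var: "\<And>i. 1 \<le> i \<Longrightarrow> (\<integral>\<omega>. (norm (X i \<omega>))\<^sup>2 \<partial>M) \<le> \<sigma>2"
    \<comment> \<open>Assumption A3\<close>
    and C1_nonneg: "0 \<le> C\<^sub>1" and C2_nonneg: "0 \<le> C\<^sub>2"
    and h1_in: "\<And>s :: 'b \<Rightarrow>\<^sub>L real. restrX c (blinfun_apply s) \<in> C"
    and h1_bd: "\<And>s :: 'b \<Rightarrow>\<^sub>L real. norm s \<le> 1 \<Longrightarrow> Cn (restrX c (blinfun_apply s)) \<le> C\<^sub>1"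
    and h2_in: "restrX c (\<lambda>x. (norm x)\<^sup>2) \<in> C"
    and h2_bd: "Cn (restrX c (\<lambda>x. (norm x)\<^sup>2)) \<le> C\<^sub>2"
    \<comment> \<open>finiteness of the mixing coefficient (otherwise the right-hand side is infinite)\<close>
    and Phi_fin: "C_mixing_coeff M X C Cn k < \<infinity>"
    \<comment> \<open>block decomposition\<close>
    and n_eq: "n = l * k + r" and l_gt: "1 < l" and k_gt: "1 < k" and r_lt: "r < k"
    and lam: "0 \<le> lam"
  shows "(\<integral>\<omega>. exp (lam * norm ((1 / real n) *\<^sub>R (\<Sum>i=1..n. X i \<omega>))) \<partial>M)
     \<le> 2 * exp ((A\<^sub>1\<^sup>2 + A\<^sub>2) / c\<^sup>2
                 * ((real l + 1) * \<sigma>2 + C\<^sub>2 * real l * real_of_ereal (C_mixing_coeff M X C Cn k))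
                 * pi_fun (lam * c / real l)
               + lam * (C\<^sub>1 * A\<^sub>1) * real_of_ereal (C_mixing_coeff M X C Cn k))"
proof -
  interpret C_mixing_process M X C Cn c \<sigma>2 C\<^sub>1 C\<^sub>2 k
    by (rule C_mixing_process.intro) (fact assms)+
  have smooth: "gateaux_smooth (norm :: 'b \<Rightarrow> real) A\<^sub>1 A\<^sub>2"
    using A1 unfolding gateaux_smooth_def by blast
  have "(\<integral>\<omega>. exp (lam * norm ((1 / real n) *\<^sub>R (\<Sum>i = 1..n. X i \<omega>))) \<partial>M)
      \<le> 2 * ((1 + (A\<^sub>1\<^sup>2 + A\<^sub>2) / c\<^sup>2 * \<sigma>2 * pi_fun (lam / l * c))
      * (1 + ((A\<^sub>1\<^sup>2 + A\<^sub>2) / c\<^sup>2 * (\<sigma>2 + C\<^sub>2 * \<Phi>) * pi_fun (lam / l * c) + lam / l * A\<^sub>1 * (C\<^sub>1 * \<Phi>))) ^ l)"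
    using integral_exp_norm_mean_le[OF smooth A1_ge _ n_eq _ _ r_lt lam] A2_pos l_gt k_gt
    by (simp add: add.assoc)
  also have "\<dots> \<le> 2 * exp ((A\<^sub>1\<^sup>2 + A\<^sub>2) / c\<^sup>2 * \<sigma>2 * pi_fun (lam / l * c)
      + l * ((A\<^sub>1\<^sup>2 + A\<^sub>2) / c\<^sup>2 * (\<sigma>2 + C\<^sub>2 * \<Phi>) * pi_fun (lam / l * c) + lam / l * A\<^sub>1 * (C\<^sub>1 * \<Phi>)))"
    using A1_ge A2_pos sigma_pos Phi_nonneg C1_nonneg C2_nonneg lam pi_fun_nonneg[of "lam / l * c"]
    by (intro mult_left_mono one_plus_mult_power_le_exp add_nonneg_nonneg mult_nonneg_nonneg
        divide_nonneg_nonneg) auto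
  also have "\<dots> = 2 * exp ((A\<^sub>1\<^sup>2 + A\<^sub>2) / c\<^sup>2 * ((real l + 1) * \<sigma>2 + C\<^sub>2 * real l * \<Phi>)
      * pi_fun (lam * c / real l) + lam * (C\<^sub>1 * A\<^sub>1) * \<Phi>)"
  proof -
    have "lam / l * c = lam * c / l" "real l \<noteq> 0"
      using l_gt by simp_all
    then show ?thesis
      by (simp add: algebra_simps add_divide_distrib)
  qed
  finally show ?thesis
    by (simp add: \<Phi>_def)
qed

end
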